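(* Suppose $\mu_P$ is the Parry measure on $\Sigma_A$, i.e. $P_{ij}=\frac{A_{ij}v_j}{\lambda(A)v_i}$ where $\mathbf v$ is a positive right eigenvector of $A$ for its Perron root $\lambda(A)$. Then for every finite nonempty collection $\mathcal G$ of allowed words, $$\rho(H_{\mathcal G})=-\ln\frac{\lambda(B_{\mathcal G})}{\lambda(A)}=h_{\rm top}(\Sigma_A)-h_{\rm top}(\Sigma_{B_{\mathcal G}}),$$ where $\Sigma_{B_{\mathcal G}}$ is the subshift of finite type with adjacency matrix $B_{\mathcal G}$ and $h_{\rm top}$ denotes topological entropy.
   Context: Let $\Sigma=\{1,\dots,N\}$ and let $A$ be an irreducible $N\times N$ $0$–$1$ matrix. $\Sigma_A=\{x\in\Sigma^{\mathbb N}: A_{x_nx_{n+1}}=1\ \forall n\}$ with left shift $\sigma$; $\mathcal L_n$ is the set of allowed words of length $n$ (words appearing in some element of $\Sigma_A$); $C_w$ is the cylinder of sequences in $\Sigma_A$ beginning with $w$. For a row-stochastic $P$ compatible with $A$ ($P_{ij}>0$ iff $A_{ij}=1$) with stationary vector $\mathbf p$, $\mu_P(C_w)=p_{w_1}P_{w_1w_2}\cdots P_{w_{n-1}w_n}$. For a finite collection $\mathcal G$ of allowed words, $H_{\mathcal G}=\bigcup_{w\in\mathcal G}C_w$; $\mathcal W_m=\{x:\sigma^ix\notin H_{\mathcal G},0\le i\le m\}$ and $\rho(H_{\mathcal G})=-\lim_m\frac1m\ln\mu_P(\mathcal W_m)$. With $r$ the maximal length of a word in $\mathcal G$ and $X*Y=x_1\cdots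 x_ny_n$ for $X=x_1\cdots x_n,Y=y_1\cdots y_n$ with $x_2\cdots x_n=y_1\cdots y_{n-1}$: if $r\ge2$, $B_{\mathcal G}$ is the $0$–$1$ matrix indexed by $\mathcal L_{r-1}$ with $(B_{\mathcal G})_{XY}=1$ iff $X*Y$ is defined, lies in $\mathcal L_r$ and contains no word of $\mathcal G$ as a subword; if $r=1$, $B_{\mathcal G}$ is indexed by $\Sigma$ with $(B_{\mathcal G})_{ij}=1$ iff $ij\in\mathcal L_2$ and $i,j\notin\mathcal G$. $\lambda(\cdot)$ is the spectral radius. *)

theory Defs
  imports "HOL-Probability.Probability" "HOL-Library.Sublist"
begin

(* Matrices are functions 'i => 'i => real, restricted to a finite index set I. *)

fun mpow :: "'i set \<Rightarrow> ('i \<Rightarrow> 'i \<Rightarrow> real) \<Rightarrow> nat \<Rightarrow> 'i \<Rightarrow> 'i \<Rightarrow> real" where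
  "mpow I M 0 = (\<lambda>i j. if i = j then 1 else 0)"
| "mpow I M (Suc n) = (\<lambda>i j. \<Sum>k\<in>I. mpow I M n i k * M k j)"

definition irreducible_mat :: "'i set \<Rightarrow> ('i \<Rightarrow> 'i \<Rightarrow> real) \<Rightarrow> bool" where
  "irreducible_mat I M \<longleftrightarrow> (\<forall>i\<in>I. \<forall>j\<in>I. \<exists>n>0. mpow I M n i j > 0)"

definition zero_one_mat :: "'i set \<Rightarrow> ('i \<Rightarrow> 'i \<Rightarrow> real) \<Rightarrow> bool" where
  "zero_one_mat I M \<longleftrightarrow> (\<forall>i\<in>I. \<forall>j\<in>I. M i j = 0 \<or> M i j = 1)"

definition mat_eigenvalues :: "'i set \<Rightarrow> ('i \<Rightarrow> 'i \<Rightarrow> real) \<Rightarrow> complex set" where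
  "mat_eigenvalues I M = {z. \<exists>v :: 'i \<Rightarrow> complex. (\<exists>i\<in>I. v i \<noteq> 0) \<and>
      (\<forall>i\<in>I. (\<Sum>j\<in>I. complex_of_real (M i j) * v j) = z * v i)}"

definition spec_rad :: "'i set \<Rightarrow> ('i \<Rightarrow> 'i \<Rightarrow> real) \<Rightarrow> real" where
  "spec_rad I M = Max (cmod ` mat_eigenvalues I M)"

definition sft :: "'i set \<Rightarrow> ('i \<Rightarrow> 'i \<Rightarrow> real) \<Rightarrow> (nat \<Rightarrow> 'i) set" where
  "sft I M = {x. (\<forall>n. x n \<in> I) \<and> (\<forall>n. M (x n) (x (Suc n)) = 1)}"

definition lang :: "(nat \<Rightarrow> 'i) set \<Rightarrow> nat \<Rightarrow> 'i list set" where
  "lang X n = {w. length w = n \<and> (\<exists>x\<in>X. \<exists>k. w = map x [k..<k+n])}"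

definition htop :: "(nat \<Rightarrow> 'i) set \<Rightarrow> real" where
  "htop X = lim (\<lambda>n. ln (real (card (lang X n))) / real n)"

definition cyl :: "(nat \<Rightarrow> 'i) set \<Rightarrow> 'i list \<Rightarrow> (nat \<Rightarrow> 'i) set" where
  "cyl X w = {x\<in>X. \<forall>i<length w. x i = w ! i}"

definition hole :: "(nat \<Rightarrow> 'i) set \<Rightarrow> 'i list set \<Rightarrow> (nat \<Rightarrow> 'i) set" where
  "hole X G = (\<Union>w\<in>G. cyl X w)"

definition shiftn :: "nat \<Rightarrow> (nat \<Rightarrow> 'i) \<Rightarrow> (nat \<Rightarrow> 'i)" where
  "shiftn i x = (\<lambda>n. x (n + i))"

definition survivors :: "(nat \<Rightarrow> 'i) set \<Rightarrow> 'i list set \<Rightarrow> nat \<Rightarrow> (nat \<Rightarrow> 'i) set" where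
  "survivors X G m = {x\<in>X. \<forall>i\<le>m. shiftn i x \<notin> hole X G}"

definition maxlen :: "'i list set \<Rightarrow> nat" where
  "maxlen G = Max (length ` G)"

(* index set of B_G: L_{r-1} if r >= 2; if r = 1 the symbols i are represented by
   the one-letter words [i] (i.e. L_1) *)
definition B_index :: "(nat \<Rightarrow> 'i) set \<Rightarrow> 'i list set \<Rightarrow> 'i list set" where
  "B_index X G = (if maxlen G \<ge> 2 then lang X (maxlen G - 1) else lang X 1)"

(* X * Y is defined iff tl X = butlast Y, and then X * Y = X @ [last Y] *)
definition B_mat :: "(nat \<Rightarrow> 'i) set \<Rightarrow> 'i list set \<Rightarrow> 'i list \<Rightarrow> 'i list \<Rightarrow> real" where
  "B_mat X G U V =
     (if maxlen G \<ge> 2 then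
        (if U \<noteq> [] \<and> V \<noteq> [] \<and> tl U = butlast V \<and> U @ [last V] \<in> lang X (maxlen G)
            \<and> \<not> (\<exists>g\<in>G. sublist g (U @ [last V])) then 1 else 0)
      else
        (if length U = 1 \<and> length V = 1 \<and> U @ V \<in> lang X 2 \<and> U \<notin> G \<and> V \<notin> G then 1 else 0))"

end

theory Submission
  imports Defs "Jordan_Normal_Form.Spectral_Radius"
begin

text \<open>
  For the Parry measure the cylinder of an allowed word \<open>u\<close> of length \<open>k + 1\<close> has measure
  \<open>p\<^sub>u\<^sub>0 v\<^sub>u\<^sub>k / (v\<^sub>u\<^sub>0 \<lambda>(A)\<^sup>k)\<close>, so up to bounded factors every allowed word of
  length \<open>n\<close> carries mass \<open>\<lambda>(A)\<^sup>-\<^sup>n\<close>. The survivor set \<open>W\<^sub>m\<close> lies between the unions of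
  cylinders of the allowed \<open>\<G>\<close>-free words of lengths \<open>m + r\<close> and \<open>m + 1\<close>, so \<open>\<mu>(W\<^sub>m)\<close> is
  \<open>\<lambda>(A)\<^sup>-\<^sup>m\<close> times the number of such words, up to subexponential factors. Gluing overlapping
  blocks of length \<open>r - 1\<close> identifies these words with the walks in the graph of \<open>B\<^sub>\<G>\<close>,
  whose number grows like \<open>\<lambda>(B\<^sub>\<G>)\<^sup>m\<close>: an eigenvector of maximal modulus gives the lower
  bound, the Jordan normal form the upper one. The same walk count shows that the entropy of
  a subshift of finite type is the logarithm of the spectral radius of its matrix.
\<close>

section \<open>Spectral radius of matrices indexed by a finite set\<close>

definition jnf_mat :: "nat \<Rightarrow> (nat \<Rightarrow> 'i) \<Rightarrow> ('i \<Rightarrow> 'i \<Rightarrow> real) \<Rightarrow> complex mat" where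
  "jnf_mat d h M = mat d d (\<lambda>(a,b). complex_of_real (M (h a) (h b)))"

lemma jnf_mat_carrier: "jnf_mat d h M \<in> carrier_mat d d"
  by (simp add: jnf_mat_def)

lemma jnf_mat_pow_index:
  assumes bij: "bij_betw h {0..<d} I" and a: "a < d" and b: "b < d"
  shows "(jnf_mat d h M ^\<^sub>m k) $$ (a,b) = complex_of_real (mpow I M k (h a) (h b))"
  using b
proof (induction k arbitrary: b)
  case 0
  have "h a = h b \<longleftrightarrow> a = b" using bij a 0 unfolding bij_betw_def inj_on_def by auto
  then show ?case using a 0 by (simp add: jnf_mat_def)
next
  case (Suc k)
  have "(jnf_mat d h M ^\<^sub>m Suc k) $$ (a,b) = row (jnf_mat d h M ^\<^sub>m k) a \<bullet> col (jnf_mat d h M) b"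
    using a Suc.prems by (simp only: pow_mat.simps(2)) (rule index_mult_mat(1); simp add: jnf_mat_def)
  also have "\<dots> = complex_of_real (\<Sum>c\<in>{0..<d}. mpow I M k (h a) (h c) * M (h c) (h b))"
    unfolding scalar_prod_def of_real_sum using a Suc.prems Suc.IH
    by (intro sum.cong) (auto simp: jnf_mat_def pow_mat_dim_square[OF jnf_mat_carrier])
  also have "(\<Sum>c\<in>{0..<d}. mpow I M k (h a) (h c) * M (h c) (h b)) = (\<Sum>j\<in>I. mpow I M k (h a) j * M j (h b))"
    using sum.reindex_bij_betw[OF bij, of "\<lambda>j. mpow I M k (h a) j * M j (h b)"] by simp
  finally show ?case by simp
qed

lemma jnf_mat_mult_vec:
  assumes bij: "bij_betw h {0..<d} I" and a: "a < d" and x: "dim_vec x = d"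
  shows "(jnf_mat d h M *\<^sub>v x) $ a
           = (\<Sum>j\<in>I. complex_of_real (M (h a) j) * x $ the_inv_into {0..<d} h j)"
proof -
  have "(jnf_mat d h M *\<^sub>v x) $ a = (\<Sum>b\<in>{0..<d}. complex_of_real (M (h a) (h b)) * x $ b)"
    using a x by (simp add: jnf_mat_def scalar_prod_def)
  also have "\<dots> = (\<Sum>b\<in>{0..<d}. complex_of_real (M (h a) (h b)) * x $ the_inv_into {0..<d} h (h b))"
    using bij by (intro sum.cong) (auto simp: bij_betw_def the_inv_into_f_f)
  also have "\<dots> = (\<Sum>j\<in>I. complex_of_real (M (h a) j) * x $ the_inv_into {0..<d} h j)"
    using sum.reindex_bij_betw[OF bij, of "\<lambda>j. complex_of_real (M (h a) j) * x $ the_inv_into {0..<d} h j"]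
    by simp
  finally show ?thesis .
qed

lemma the_inv_into_bij_betw_atLeastLessThan:
  assumes "bij_betw h {0..<d} I" and "i \<in> I"
  shows "the_inv_into {0..<d} h i < d" and "h (the_inv_into {0..<d} h i) = i"
  using assms unfolding bij_betw_def
  by (metis atLeastLessThan_iff f_the_inv_into_f the_inv_into_into order_refl)+

lemma mat_eigenvalues_subset_spectrum:
  assumes bij: "bij_betw h {0..<d} I"
  shows "mat_eigenvalues I M \<subseteq> Spectral_Radius.spectrum (jnf_mat d h M)"
proof
  fix z assume "z \<in> mat_eigenvalues I M"
  then obtain v where v0: "\<exists>i\<in>I. v i \<noteq> 0"
    and ve: "\<forall>i\<in>I. (\<Sum>j\<in>I. complex_of_real (M i j) * v j) = z * v i"
    unfolding mat_eigenvalues_def by auto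
  define x where "x = vec d (\<lambda>a. v (h a))"
  have x_inv: "x $ the_inv_into {0..<d} h j = v j" if "j \<in> I" for j
    using the_inv_into_bij_betw_atLeastLessThan[OF bij that] by (simp add: x_def)
  have dim: "dim_row (jnf_mat d h M) = d" by (simp add: jnf_mat_def)
  have "eigenvector (jnf_mat d h M) x z"
    unfolding eigenvector_def
  proof (intro conjI)
    show "x \<in> carrier_vec (dim_row (jnf_mat d h M))" by (simp add: x_def dim)
    show "x \<noteq> 0\<^sub>v (dim_row (jnf_mat d h M))"
    proof
      assume "x = 0\<^sub>v (dim_row (jnf_mat d h M))"
      then have "v j = 0" if "j \<in> I" for j
        using x_inv[OF that] the_inv_into_bij_betw_atLeastLessThan(1)[OF bij that] dim by simp
      with v0 show False by auto
    qed
    show "jnf_mat d h M *\<^sub>v x = z \<cdot>\<^sub>v x"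
    proof (rule eq_vecI)
      fix a assume "a < dim_vec (z \<cdot>\<^sub>v x)"
      then have a: "a < d" by (simp add: x_def)
      have "h a \<in> I" using bij a unfolding bij_betw_def by auto
      then have "(jnf_mat d h M *\<^sub>v x) $ a = z * v (h a)"
        using jnf_mat_mult_vec[OF bij a] x_inv ve by (simp add: x_def)
      then show "(jnf_mat d h M *\<^sub>v x) $ a = (z \<cdot>\<^sub>v x) $ a" using a by (simp add: x_def)
    qed (simp add: x_def jnf_mat_def)
  qed
  then show "z \<in> Spectral_Radius.spectrum (jnf_mat d h M)"
    unfolding Spectral_Radius.spectrum_def eigenvalue_def by auto
qed

lemma spectrum_subset_mat_eigenvalues:
  assumes bij: "bij_betw h {0..<d} I"
  shows "Spectral_Radius.spectrum (jnf_mat d h M) \<subseteq> mat_eigenvalues I M"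
proof
  fix z assume "z \<in> Spectral_Radius.spectrum (jnf_mat d h M)"
  then obtain x where "eigenvector (jnf_mat d h M) x z"
    unfolding Spectral_Radius.spectrum_def eigenvalue_def by auto
  then have x: "dim_vec x = d" and x0: "x \<noteq> 0\<^sub>v d" and eq: "jnf_mat d h M *\<^sub>v x = z \<cdot>\<^sub>v x"
    unfolding eigenvector_def by (auto simp: jnf_mat_def)
  define v where "v = (\<lambda>j. x $ the_inv_into {0..<d} h j)"
  have "\<exists>i\<in>I. v i \<noteq> 0"
  proof (rule ccontr)
    assume "\<not> ?thesis"
    then have "x $ a = 0" if "a < d" for a
      using that bij unfolding v_def bij_betw_def by (auto simp: the_inv_into_f_f)
    then have "x = 0\<^sub>v d" using x by (intro eq_vecI) auto
    with x0 show False by simp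
  qed
  moreover have "(\<Sum>j\<in>I. complex_of_real (M i j) * v j) = z * v i" if i: "i \<in> I" for i
    using jnf_mat_mult_vec[OF bij _ x, of "the_inv_into {0..<d} h i" M] eq x
      the_inv_into_bij_betw_atLeastLessThan[OF bij i]
    by (simp add: v_def)
  ultimately show "z \<in> mat_eigenvalues I M" unfolding mat_eigenvalues_def by auto
qed

lemma mat_eigenvalues_eq_spectrum:
  "bij_betw h {0..<d} I \<Longrightarrow> mat_eigenvalues I M = Spectral_Radius.spectrum (jnf_mat d h M)"
  by (simp add: mat_eigenvalues_subset_spectrum spectrum_subset_mat_eigenvalues subset_antisym)

lemma mat_eigenvalues_finite_nonempty:
  assumes "finite I" "I \<noteq> {}"
  shows "finite (mat_eigenvalues I M)" "mat_eigenvalues I M \<noteq> {}"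
proof -
  obtain h where bij: "bij_betw h {0..<card I} I" using ex_bij_betw_nat_finite[OF assms(1)] by auto
  have "card I > 0" using assms by auto
  then show "finite (mat_eigenvalues I M)" "mat_eigenvalues I M \<noteq> {}"
    unfolding mat_eigenvalues_eq_spectrum[OF bij]
    using card_finite_spectrum(1)[OF jnf_mat_carrier[of "card I" h M]]
      spectrum_non_empty[OF jnf_mat_carrier[of "card I" h M]] by auto
qed

lemma norm_le_spec_rad:
  assumes "finite I" "I \<noteq> {}" "z \<in> mat_eigenvalues I M"
  shows "cmod z \<le> spec_rad I M"
  unfolding spec_rad_def using mat_eigenvalues_finite_nonempty[OF assms(1,2)] assms(3)
  by (intro Max_ge) auto

lemma spec_rad_attained:
  assumes "finite I" "I \<noteq> {}"
  shows "\<exists>z\<in>mat_eigenvalues I M. cmod z = spec_rad I M"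
proof -
  have "spec_rad I M \<in> cmod ` mat_eigenvalues I M"
    unfolding spec_rad_def using mat_eigenvalues_finite_nonempty[OF assms] by (intro Max_in) auto
  then show ?thesis by auto
qed

lemma spec_rad_nonneg:
  assumes "finite I" "I \<noteq> {}"
  shows "spec_rad I M \<ge> 0"
  using spec_rad_attained[OF assms, of M] by (metis norm_ge_zero)

lemma mpow_divide_const: "mpow I (\<lambda>i j. M i j / c) k i j = mpow I M k i j / c ^ k"
  by (induction k arbitrary: j) (simp_all add: sum_divide_distrib mult.commute)

lemma mat_eigenvalues_divide_const:
  assumes "c \<noteq> 0" and "z \<in> mat_eigenvalues I (\<lambda>i j. M i j / c)"
  shows "z * complex_of_real c \<in> mat_eigenvalues I M"
proof -
  obtain v where v0: "\<exists>i\<in>I. v i \<noteq> 0"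
    and ve: "\<forall>i\<in>I. (\<Sum>j\<in>I. complex_of_real (M i j / c) * v j) = z * v i"
    using assms(2) unfolding mat_eigenvalues_def by auto
  have "(\<Sum>j\<in>I. complex_of_real (M i j) * v j) = z * complex_of_real c * v i" if "i \<in> I" for i
  proof -
    have "(\<Sum>j\<in>I. complex_of_real (M i j) * v j)
          = complex_of_real c * (\<Sum>j\<in>I. complex_of_real (M i j / c) * v j)"
      unfolding sum_distrib_left using assms(1) by (intro sum.cong) (auto simp: field_simps)
    then show ?thesis using ve that by simp
  qed
  with v0 show ?thesis unfolding mat_eigenvalues_def by auto
qed

lemma mpow_bounded_by_power:
  assumes fin: "finite I" and ne: "I \<noteq> {}" and lt: "spec_rad I M < r"
  shows "\<exists>C. \<forall>k. \<forall>i\<in>I. \<forall>j\<in>I. \<bar>mpow I M k i j\<bar> \<le> C * r ^ k"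
proof -
  have r0: "r > 0" using spec_rad_nonneg[OF fin ne, of M] lt by linarith
  define M' where "M' = (\<lambda>i j. M i j / r)"
  define d where "d = card I"
  obtain h where bij: "bij_betw h {0..<d} I" using ex_bij_betw_nat_finite[OF fin] d_def by auto
  have "x < 1" if "x \<in> norm ` Spectral_Radius.spectrum (jnf_mat d h M')" for x
  proof -
    from that obtain z where z: "z \<in> mat_eigenvalues I M'" and x: "x = cmod z"
      using mat_eigenvalues_eq_spectrum[OF bij] by auto
    have "cmod z * r \<le> spec_rad I M"
      using norm_le_spec_rad[OF fin ne mat_eigenvalues_divide_const[OF _ z[unfolded M'_def]]] r0
      by (simp add: norm_mult)
    then have "cmod z * r < 1 * r" using lt by simp
    then show ?thesis using x r0 mult_less_cancel_right_pos[of r "cmod z" 1] by simp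
  qed
  then have "spectral_radius (jnf_mat d h M') < 1"
    unfolding spectral_radius_def
    using mat_eigenvalues_finite_nonempty[OF fin ne, of M'] mat_eigenvalues_eq_spectrum[OF bij, of M']
    by (subst Max_less_iff) auto
  then obtain c where c: "\<forall>k. norm_bound (jnf_mat d h M' ^\<^sub>m k) c"
    using spectral_radius_jnf_norm_bound_less_1_upper_triangular[OF jnf_mat_carrier] by blast
  have "\<bar>mpow I M k i j\<bar> \<le> c * r ^ k" if i: "i \<in> I" and j: "j \<in> I" for k i j
  proof -
    obtain a b where a: "a < d" "h a = i" and b: "b < d" "h b = j"
      using bij i j unfolding bij_betw_def by force
    have "norm ((jnf_mat d h M' ^\<^sub>m k) $$ (a,b)) \<le> c"
      using c a b unfolding norm_bound_def by (simp add: jnf_mat_def)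
    then have "\<bar>mpow I M' k i j\<bar> \<le> c"
      using jnf_mat_pow_index[OF bij a(1) b(1), of M' k] a b by simp
    then have "\<bar>mpow I M k i j\<bar> / r ^ k \<le> c"
      using r0 by (simp add: M'_def mpow_divide_const abs_div)
    then show ?thesis using r0 by (simp add: divide_le_eq)
  qed
  then show ?thesis by blast
qed

lemma mpow_nonneg:
  assumes "\<forall>i\<in>I. \<forall>j\<in>I. M i j \<ge> 0" and "j \<in> I"
  shows "mpow I M k i j \<ge> 0"
  using assms(2) by (induction k arbitrary: j) (use assms(1) in \<open>auto intro!: sum_nonneg\<close>)

lemma mpow_eq_0_into_closed:
  assumes "\<forall>l\<in>I - Z. \<forall>j\<in>Z. M l j = 0" and "k \<in> I - Z" and "j \<in> Z"
  shows "mpow I M n k j = 0"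
  using assms(3)
proof (induction n arbitrary: j)
  case 0
  then show ?case using assms(2) by auto
next
  case (Suc n)
  have "mpow I M n k l * M l j = 0" if "l \<in> I" for l
    using Suc assms(1) that by (cases "l \<in> Z") auto
  then show ?case by (simp add: sum.neutral)
qed

lemma mpow_eigenvector:
  assumes "\<forall>i\<in>I. (\<Sum>j\<in>I. complex_of_real (M i j) * v j) = z * v i" "i \<in> I" "finite I"
  shows "(\<Sum>j\<in>I. complex_of_real (mpow I M k i j) * v j) = z ^ k * v i"
proof (induction k)
  case 0
  have "(\<Sum>j\<in>I. complex_of_real (mpow I M 0 i j) * v j) = (\<Sum>j\<in>I. if j = i then v j else 0)"
    by (intro sum.cong) auto
  also have "\<dots> = v i" using assms(2,3) by (auto simp: sum.delta')
  finally show ?case by simp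
next
  case (Suc k)
  have "(\<Sum>j\<in>I. complex_of_real (mpow I M (Suc k) i j) * v j)
      = (\<Sum>j\<in>I. \<Sum>l\<in>I. complex_of_real (mpow I M k i l) * (complex_of_real (M l j) * v j))"
    by (simp add: sum_distrib_right mult.assoc)
  also have "\<dots> = (\<Sum>l\<in>I. complex_of_real (mpow I M k i l) * (\<Sum>j\<in>I. complex_of_real (M l j) * v j))"
    by (subst sum.swap) (simp add: sum_distrib_left)
  also have "\<dots> = (\<Sum>l\<in>I. complex_of_real (mpow I M k i l) * v l) * z"
    using assms(1) by (simp add: sum_distrib_right sum_distrib_left mult.assoc mult.commute)
  finally show ?case using Suc by simp
qed

lemma spec_rad_power_le_row_sum:
  assumes fin: "finite I" and ne: "I \<noteq> {}" and nn: "\<forall>i\<in>I. \<forall>j\<in>I. M i j \<ge> 0"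
  shows "\<exists>i\<in>I. \<forall>k. spec_rad I M ^ k \<le> (\<Sum>j\<in>I. mpow I M k i j)"
proof -
  obtain z where z: "z \<in> mat_eigenvalues I M" and zr: "cmod z = spec_rad I M"
    using spec_rad_attained[OF fin ne] by blast
  obtain v where v0: "\<exists>i\<in>I. v i \<noteq> 0"
    and ve: "\<forall>i\<in>I. (\<Sum>j\<in>I. complex_of_real (M i j) * v j) = z * v i"
    using z unfolding mat_eigenvalues_def by auto
  obtain i where i: "i \<in> I" and imax: "\<And>j. j \<in> I \<Longrightarrow> cmod (v j) \<le> cmod (v i)"
  proof -
    have "Max ((\<lambda>j. cmod (v j)) ` I) \<in> (\<lambda>j. cmod (v j)) ` I" using fin ne by (intro Max_in) auto
    then obtain i where i: "i \<in> I" and "cmod (v i) = Max ((\<lambda>j. cmod (v j)) ` I)" by auto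
    moreover have "cmod (v j) \<le> Max ((\<lambda>j. cmod (v j)) ` I)" if "j \<in> I" for j
      using fin that by (intro Max_ge) auto
    ultimately show ?thesis using that by simp
  qed
  have m0: "cmod (v i) > 0"
  proof -
    obtain j where j: "j \<in> I" "v j \<noteq> 0" using v0 by blast
    then have "0 < cmod (v j)" by simp
    then show ?thesis using imax[OF j(1)] by linarith
  qed
  have "spec_rad I M ^ k \<le> (\<Sum>j\<in>I. mpow I M k i j)" for k
  proof -
    have "spec_rad I M ^ k * cmod (v i) = cmod (\<Sum>j\<in>I. complex_of_real (mpow I M k i j) * v j)"
      using zr mpow_eigenvector[OF ve i fin] by (simp add: norm_mult norm_power)
    also have "\<dots> \<le> (\<Sum>j\<in>I. cmod (complex_of_real (mpow I M k i j) * v j))" by (rule norm_sum)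
    also have "\<dots> \<le> (\<Sum>j\<in>I. mpow I M k i j * cmod (v i))"
      using mpow_nonneg[OF nn] imax by (intro sum_mono) (simp add: norm_mult mult_left_mono)
    also have "\<dots> = (\<Sum>j\<in>I. mpow I M k i j) * cmod (v i)" by (simp add: sum_distrib_right)
    finally show ?thesis using m0 by simp
  qed
  with i show ?thesis by blast
qed

section \<open>Counting walks\<close>

definition walks :: "'i set \<Rightarrow> ('i \<Rightarrow> 'i \<Rightarrow> real) \<Rightarrow> nat \<Rightarrow> 'i list set" where
  "walks I M k = {w. length w = Suc k \<and> set w \<subseteq> I \<and> (\<forall>i<k. M (w!i) (w!Suc i) = 1)}"

lemma finite_walks: "finite I \<Longrightarrow> finite (walks I M k)"
  by (rule finite_subset[OF _ finite_lists_length_eq[of I "Suc k"]]) (auto simp: walks_def)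

lemma walks_not_Nil: "w \<in> walks I M k \<Longrightarrow> w \<noteq> []"
  by (auto simp: walks_def)

lemma walks_0: "walks I M 0 = (\<lambda>a. [a]) ` I"
proof (rule Set.set_eqI)
  fix w show "w \<in> walks I M 0 \<longleftrightarrow> w \<in> (\<lambda>a. [a]) ` I"
    by (cases w) (auto simp: walks_def)
qed

lemma last_eq_nth_length_Suc: "length w = Suc k \<Longrightarrow> last w = w ! k"
  by (cases w rule: rev_exhaust) (auto simp: nth_append)

lemma walks_nth_mem: "w \<in> walks I M k \<Longrightarrow> i \<le> k \<Longrightarrow> w ! i \<in> I"
  by (auto simp: walks_def dest: nth_mem)

lemma walks_hd_mem: "w \<in> walks I M k \<Longrightarrow> hd w \<in> I"
  by (cases w) (auto simp: walks_def)

lemma walks_last_mem: "w \<in> walks I M k \<Longrightarrow> last w \<in> I"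
  using walks_nth_mem[of w I M k k] last_eq_nth_length_Suc[of w k] by (simp add: walks_def)

lemma walks_snoc_iff:
  "w @ [b] \<in> walks I M (Suc k) \<longleftrightarrow> w \<in> walks I M k \<and> b \<in> I \<and> M (last w) b = 1"
proof
  assume h: "w @ [b] \<in> walks I M (Suc k)"
  then have len: "length w = Suc k" by (simp add: walks_def)
  have "M (w!i) (w!Suc i) = 1" if "i < k" for i
  proof -
    have "M ((w@[b])!i) ((w@[b])!Suc i) = 1" using h that by (auto simp: walks_def)
    then show ?thesis using that len by (simp add: nth_append)
  qed
  moreover have "M ((w@[b])!k) ((w@[b])!Suc k) = 1" using h by (auto simp: walks_def)
  then have "M (last w) b = 1" using len by (simp add: nth_append last_eq_nth_length_Suc)
  ultimately show "w \<in> walks I M k \<and> b \<in> I \<and> M (last w) b = 1" using h len by (auto simp: walks_def)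
next
  assume h: "w \<in> walks I M k \<and> b \<in> I \<and> M (last w) b = 1"
  then have len: "length w = Suc k" by (simp add: walks_def)
  have "M ((w@[b])!i) ((w@[b])!Suc i) = 1" if i: "i < Suc k" for i
  proof (cases "i < k")
    case True then show ?thesis using h len by (auto simp: walks_def nth_append)
  next
    case False then have "i = k" using i by auto
    then show ?thesis using h len by (simp add: nth_append last_eq_nth_length_Suc)
  qed
  then show "w @ [b] \<in> walks I M (Suc k)" using h len by (auto simp: walks_def)
qed

lemma walks_SucE:
  assumes "u \<in> walks I M (Suc k)"
  obtains w b where "u = w @ [b]" "w \<in> walks I M k" "b \<in> I" "M (last w) b = 1"
proof -
  obtain w b where u: "u = w @ [b]" using assms by (cases u rule: rev_exhaust) (auto simp: walks_def)
  then have "w \<in> walks I M k" "b \<in> I" "M (last w) b = 1"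
    using assms walks_snoc_iff[of w b I M k] by simp_all
  with u show ?thesis by (rule that)
qed

lemma walks_take: "w \<in> walks I M (k + l) \<Longrightarrow> take (Suc k) w \<in> walks I M k"
  by (auto simp: walks_def dest: in_set_takeD)

lemma walks_drop: "w \<in> walks I M (k + l) \<Longrightarrow> drop k w \<in> walks I M l"
  by (auto simp: walks_def dest: in_set_dropD)

lemma hd_drop_walk: "w \<in> walks I M (k + l) \<Longrightarrow> hd (drop k w) = w ! k"
  by (simp add: walks_def hd_drop_conv_nth)

lemma walks_take_le:
  assumes "w \<in> walks I M k" "k' \<le> k"
  shows "take (Suc k') w \<in> walks I M k'" "hd (take (Suc k') w) = hd w"
proof -
  obtain l where "k = k' + l" using assms(2) le_Suc_ex by blast
  then show "take (Suc k') w \<in> walks I M k'" using walks_take assms(1) by blast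
  show "hd (take (Suc k') w) = hd w" using walks_not_Nil[OF assms(1)] by (cases w) auto
qed

lemma walks_from_to_Suc:
  assumes "b \<in> I"
  shows "{w\<in>walks I M (Suc k). hd w = a \<and> last w = b}
     = (\<Union>c\<in>{c\<in>I. M c b = 1}. (\<lambda>w. w @ [b]) ` {w\<in>walks I M k. hd w = a \<and> last w = c})"
  (is "?L = ?R")
proof
  show "?L \<subseteq> ?R"
  proof
    fix u assume "u \<in> ?L"
    then obtain w b' where u: "u = w @ [b']" and w: "w \<in> walks I M k" "M (last w) b' = 1"
      and hd: "hd u = a" and last: "last u = b"
      by (auto elim: walks_SucE)
    have "b' = b" using last u by simp
    moreover have "hd w = a" using hd walks_not_Nil[OF w(1)] u by simp
    ultimately show "u \<in> ?R" using u w walks_last_mem[OF w(1)] by blast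
  qed
  show "?R \<subseteq> ?L"
  proof
    fix u assume "u \<in> ?R"
    then obtain w where w: "w \<in> walks I M k" "hd w = a" "M (last w) b = 1" and u: "u = w @ [b]"
      by auto
    then show "u \<in> ?L" using walks_snoc_iff[of w b I M k] walks_not_Nil[OF w(1)] assms by simp
  qed
qed

lemma card_walks_from_to:
  assumes fin: "finite I" and zo: "zero_one_mat I M" and "b \<in> I"
  shows "real (card {w\<in>walks I M k. hd w = a \<and> last w = b}) = mpow I M k a b"
  using assms(3)
proof (induction k arbitrary: b)
  case 0
  have "{w\<in>walks I M 0. hd w = a \<and> last w = b} = (if a = b then {[a]} else {})"
    using 0 unfolding walks_0 by auto
  then show ?case by simp
next
  case (Suc k)
  have "card {w\<in>walks I M (Suc k). hd w = a \<and> last w = b}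
      = (\<Sum>c\<in>{c\<in>I. M c b = 1}. card ((\<lambda>w. w @ [b]) ` {w\<in>walks I M k. hd w = a \<and> last w = c}))"
    unfolding walks_from_to_Suc[OF Suc.prems]
  proof (rule card_UN_disjoint)
    show "finite {c\<in>I. M c b = 1}" using fin by simp
    show "\<forall>c\<in>{c\<in>I. M c b = 1}. finite ((\<lambda>w. w @ [b]) ` {w\<in>walks I M k. hd w = a \<and> last w = c})"
      using finite_walks[OF fin, of M k] by auto
  qed auto
  also have "\<dots> = (\<Sum>c\<in>{c\<in>I. M c b = 1}. card {w\<in>walks I M k. hd w = a \<and> last w = c})"
    by (intro sum.cong refl card_image inj_onI) simp
  finally have "real (card {w\<in>walks I M (Suc k). hd w = a \<and> last w = b})
      = (\<Sum>c\<in>{c\<in>I. M c b = 1}. mpow I M k a c)"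
    using Suc.IH by simp
  also have "\<dots> = (\<Sum>c\<in>I. if M c b = 1 then mpow I M k a c else 0)"
    using fin by (simp add: sum.inter_filter)
  also have "\<dots> = (\<Sum>c\<in>I. mpow I M k a c * M c b)"
    using zo Suc.prems unfolding zero_one_mat_def by (intro sum.cong) auto
  finally show ?case by simp
qed

lemma card_walks_from:
  assumes fin: "finite I" and zo: "zero_one_mat I M"
  shows "real (card {w\<in>walks I M k. hd w = a}) = (\<Sum>b\<in>I. mpow I M k a b)"
proof -
  have eq: "{w\<in>walks I M k. hd w = a} = (\<Union>b\<in>I. {w\<in>walks I M k. hd w = a \<and> last w = b})"
    using walks_last_mem by blast
  have "card {w\<in>walks I M k. hd w = a} = (\<Sum>b\<in>I. card {w\<in>walks I M k. hd w = a \<and> last w = b})"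
    unfolding eq using fin finite_walks[OF fin] by (intro card_UN_disjoint) auto
  then show ?thesis using card_walks_from_to[OF fin zo] by simp
qed

lemma card_walks:
  assumes fin: "finite I" and zo: "zero_one_mat I M"
  shows "real (card (walks I M k)) = (\<Sum>a\<in>I. \<Sum>b\<in>I. mpow I M k a b)"
proof -
  have eq: "walks I M k = (\<Union>a\<in>I. {w\<in>walks I M k. hd w = a})"
    using walks_hd_mem by blast
  have "card (walks I M k) = (\<Sum>a\<in>I. card {w\<in>walks I M k. hd w = a})"
    by (subst eq, intro card_UN_disjoint) (use fin finite_walks[OF fin] in auto)
  then show ?thesis using card_walks_from[OF fin zo] by simp
qed

lemma zero_one_mat_nonneg: "zero_one_mat I M \<Longrightarrow> \<forall>i\<in>I. \<forall>j\<in>I. M i j \<ge> 0"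
  unfolding zero_one_mat_def by force

lemma spec_rad_power_le_card_walks:
  assumes fin: "finite I" and ne: "I \<noteq> {}" and zo: "zero_one_mat I M"
  shows "spec_rad I M ^ k \<le> real (card (walks I M k))"
proof -
  obtain a where "a \<in> I" and "spec_rad I M ^ k \<le> (\<Sum>b\<in>I. mpow I M k a b)"
    using spec_rad_power_le_row_sum[OF fin ne zero_one_mat_nonneg[OF zo]] by blast
  moreover have "real (card {w\<in>walks I M k. hd w = a}) \<le> real (card (walks I M k))"
    using finite_walks[OF fin] by (intro of_nat_mono card_mono) auto
  ultimately show ?thesis using card_walks_from[OF fin zo, of k a] by linarith
qed

lemma card_walks_bounded_by_power:
  assumes fin: "finite I" and ne: "I \<noteq> {}" and zo: "zero_one_mat I M" and r: "spec_rad I M < r"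
  shows "\<exists>C. \<forall>k. real (card (walks I M k)) \<le> C * r ^ k"
proof -
  obtain C where C: "\<forall>k. \<forall>i\<in>I. \<forall>j\<in>I. \<bar>mpow I M k i j\<bar> \<le> C * r ^ k"
    using mpow_bounded_by_power[OF fin ne r] by blast
  have "real (card (walks I M k)) \<le> (real (card I) * real (card I) * C) * r ^ k" for k
  proof -
    have "real (card (walks I M k)) \<le> (\<Sum>a\<in>I. \<Sum>b\<in>I. C * r ^ k)"
      unfolding card_walks[OF fin zo] using C by (intro sum_mono) (meson abs_le_D1)
    then show ?thesis by simp
  qed
  then show ?thesis by blast
qed

section \<open>Entropy of a subshift of finite type\<close>

lemma lang_sft_subset_walks: "lang (sft I M) (Suc k) \<subseteq> walks I M k"
proof
  fix w assume "w \<in> lang (sft I M) (Suc k)"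
  then obtain x j where x: "x \<in> sft I M" and w: "w = map x [j..<j + Suc k]"
    unfolding lang_def by auto
  have wi: "w ! i = x (j + i)" if "i < Suc k" for i
    using that w by (simp add: nth_map_upt del: upt_Suc)
  have "M (w!i) (w!Suc i) = 1" if "i < k" for i
    using x that wi[of i] wi[of "Suc i"] unfolding sft_def by simp
  moreover have "set w \<subseteq> I" using x unfolding w sft_def by auto
  moreover have "length w = Suc k" using w by simp
  ultimately show "w \<in> walks I M k" unfolding walks_def by blast
qed

lemma finite_lang_sft:
  assumes "finite I"
  shows "finite (lang (sft I M) n)"
proof (cases n)
  case 0
  then have "lang (sft I M) n \<subseteq> {[]}" by (auto simp: lang_def)
  then show ?thesis by (rule finite_subset) simp
next
  case (Suc k)
  then show ?thesis using finite_subset[OF lang_sft_subset_walks finite_walks[OF assms]] by simp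
qed

lemma length_lang: "w \<in> lang X n \<Longrightarrow> length w = n"
  by (simp add: lang_def)

text \<open>Only extendable symbols occur in points of the subshift.\<close>

definition extendable :: "'i set \<Rightarrow> ('i \<Rightarrow> 'i \<Rightarrow> real) \<Rightarrow> 'i \<Rightarrow> bool" where
  "extendable I M j \<longleftrightarrow> (\<forall>k. \<exists>w\<in>walks I M k. hd w = j)"

lemma extendable_in: "extendable I M j \<Longrightarrow> j \<in> I"
  unfolding extendable_def using walks_hd_mem by blast

lemma non_extendable_uniform_bound:
  assumes fin: "finite I"
  shows "\<exists>K. \<forall>j\<in>I. \<not> extendable I M j \<longrightarrow> \<not> (\<exists>w\<in>walks I M K. hd w = j)"
proof -
  define Bad where "Bad = {j\<in>I. \<not> extendable I M j}"
  have "\<forall>j\<in>Bad. \<exists>k. \<not> (\<exists>w\<in>walks I M k. hd w = j)" unfolding Bad_def extendable_def by auto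
  then obtain f where f: "\<And>j. j \<in> Bad \<Longrightarrow> \<not> (\<exists>w\<in>walks I M (f j). hd w = j)" by metis
  have "\<not> (\<exists>w\<in>walks I M (\<Sum>j\<in>Bad. f j). hd w = j)" if j: "j \<in> Bad" for j
  proof
    assume "\<exists>w\<in>walks I M (\<Sum>j\<in>Bad. f j). hd w = j"
    then obtain w where w: "w \<in> walks I M (\<Sum>j\<in>Bad. f j)" "hd w = j" by blast
    have "f j \<le> (\<Sum>j\<in>Bad. f j)" using fin j by (intro member_le_sum) (auto simp: Bad_def)
    from walks_take_le[OF w(1) this] w(2) f[OF j] show False by auto
  qed
  then show ?thesis unfolding Bad_def by blast
qed

lemma extendable_successor:
  assumes fin: "finite I" and ext: "extendable I M j"
  shows "\<exists>j'\<in>I. M j j' = 1 \<and> extendable I M j'"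
proof -
  obtain K where K: "\<forall>j\<in>I. \<not> extendable I M j \<longrightarrow> \<not> (\<exists>w\<in>walks I M K. hd w = j)"
    using non_extendable_uniform_bound[OF fin] by blast
  obtain w where w: "w \<in> walks I M (1 + K)" "hd w = j" using ext unfolding extendable_def by blast
  have len: "length w = Suc (Suc K)" using w by (simp add: walks_def)
  have "M (w!0) (w!1) = 1" using w(1) by (auto simp: walks_def)
  moreover have "w!0 = j" using w(2) len by (cases w) auto
  moreover have w1: "w!1 \<in> I" using walks_nth_mem[OF w(1), of 1] by simp
  moreover have "extendable I M (w!1)"
  proof -
    have "drop 1 w \<in> walks I M K" "hd (drop 1 w) = w!1"
      using walks_drop[where k=1 and l=K] hd_drop_walk[where k=1 and l=K] w(1) by simp_all
    then show ?thesis using K w1 by blast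
  qed
  ultimately show ?thesis by blast
qed

lemma extendable_imp_sft_point:
  assumes fin: "finite I" and ext: "extendable I M j"
  shows "\<exists>x\<in>sft I M. x 0 = j"
proof -
  define next_sym where "next_sym = (\<lambda>y. SOME y'. y' \<in> I \<and> M y y' = 1 \<and> extendable I M y')"
  have next_sym: "next_sym y \<in> I \<and> M y (next_sym y) = 1 \<and> extendable I M (next_sym y)"
    if "extendable I M y" for y
    unfolding next_sym_def using extendable_successor[OF fin that] by (rule someI2_bex) blast
  define x where "x = (\<lambda>n. (next_sym ^^ n) j)"
  have x_ext: "extendable I M (x n)" for n by (induction n) (auto simp: x_def ext next_sym)
  have "x \<in> sft I M"
    unfolding sft_def using extendable_in[OF x_ext] next_sym[OF x_ext] by (simp add: x_def)
  then show ?thesis by (intro bexI[of _ x]) (simp_all add: x_def)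
qed

lemma walk_to_extendable_in_lang:
  assumes fin: "finite I" and w: "w \<in> walks I M k" and ext: "extendable I M (last w)"
  shows "w \<in> lang (sft I M) (Suc k)"
proof -
  obtain y where y: "y \<in> sft I M" "y 0 = last w" using extendable_imp_sft_point[OF fin ext] by blast
  have len: "length w = Suc k" using w by (simp add: walks_def)
  define x where "x = (\<lambda>n. if n \<le> k then w!n else y (n - k))"
  have "M (x n) (x (Suc n)) = 1" for n
  proof (cases "n < k")
    case True then show ?thesis using w unfolding x_def walks_def by auto
  next
    case False
    then have "x n = y (n - k) \<and> x (Suc n) = y (Suc (n - k))"
      using y len by (auto simp: x_def last_eq_nth_length_Suc Suc_diff_le)
    then show ?thesis using y(1) unfolding sft_def by auto
  qed
  moreover have "x n \<in> I" for n using w y len unfolding x_def sft_def walks_def by auto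
  ultimately have "x \<in> sft I M" unfolding sft_def by blast
  moreover have "w = map x [0..<0 + Suc k]"
    using len by (intro nth_equalityI) (auto simp: x_def nth_map_upt simp del: upt_Suc)
  ultimately show ?thesis unfolding lang_def using len by blast
qed

text \<open>A walk of length \<open>k + K\<close> splits into an element of the language and an arbitrary tail.\<close>

lemma card_walks_le_card_lang:
  assumes fin: "finite I"
  shows "\<exists>K. \<forall>k. card (walks I M (k + K)) \<le> card (lang (sft I M) (Suc k)) * card I ^ K"
proof -
  obtain K where K: "\<forall>j\<in>I. \<not> extendable I M j \<longrightarrow> \<not> (\<exists>w\<in>walks I M K. hd w = j)"
    using non_extendable_uniform_bound[OF fin] by blast
  have "card (walks I M (k + K)) \<le> card (lang (sft I M) (Suc k)) * card I ^ K" for k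
  proof -
    define split where "split = (\<lambda>w::'a list. (take (Suc k) w, drop (Suc k) w))"
    have inj: "inj_on split (walks I M (k + K))" unfolding split_def inj_on_def
      by (metis append_take_drop_id prod.inject)
    have "split ` walks I M (k + K) \<subseteq> lang (sft I M) (Suc k) \<times> {xs. set xs \<subseteq> I \<and> length xs = K}"
    proof (rule image_subsetI)
      fix w assume w: "w \<in> walks I M (k + K)"
      have len: "length w = Suc (k + K)" using w by (simp add: walks_def)
      have "extendable I M (w ! k)"
        using K walks_nth_mem[OF w, of k] walks_drop[OF w] hd_drop_walk[OF w] by auto
      then have "take (Suc k) w \<in> lang (sft I M) (Suc k)"
        using walk_to_extendable_in_lang[OF fin walks_take[OF w]] len
        by (simp add: last_eq_nth_length_Suc[of _ k])
      moreover have "set (drop (Suc k) w) \<subseteq> I" using w by (auto simp: walks_def dest: in_set_dropD)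
      ultimately show "split w \<in> lang (sft I M) (Suc k) \<times> {xs. set xs \<subseteq> I \<and> length xs = K}"
        using len by (simp add: split_def)
    qed
    then have "card (split ` walks I M (k + K))
               \<le> card (lang (sft I M) (Suc k) \<times> {xs. set xs \<subseteq> I \<and> length xs = K})"
      by (intro card_mono finite_cartesian_product finite_lang_sft finite_lists_length_eq fin)
    then show ?thesis
      by (simp add: card_image[OF inj] card_cartesian_product card_lists_length_eq fin)
  qed
  then show ?thesis by blast
qed

lemma tendsto_const_div_real: "(\<lambda>n. C / real n) \<longlonglongrightarrow> 0"
  by (intro tendsto_divide_0[OF tendsto_const] filterlim_at_top_imp_at_infinity
      filterlim_real_sequentially)

lemma eventually_gt_ln_div_real:
  fixes f :: "nat \<Rightarrow> real"
  assumes c: "c > 0" and rho: "\<rho> > 0" and lower: "\<forall>\<^sub>F n in sequentially. f n \<ge> c * \<rho> ^ n"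
    and a: "a < ln \<rho>"
  shows "\<forall>\<^sub>F n in sequentially. a < ln (f n) / real n"
proof -
  have "\<forall>\<^sub>F n in sequentially. ln c / real n > a - ln \<rho>"
    using order_tendstoD(1)[OF tendsto_const_div_real[of "ln c"]] a by simp
  then show ?thesis using lower eventually_gt_at_top[of 0]
  proof eventually_elim
    case (elim n)
    have "c * \<rho> ^ n > 0" using c rho by simp
    then have "ln (c * \<rho> ^ n) \<le> ln (f n)" using elim by (subst ln_le_cancel_iff) auto
    then have "ln c + real n * ln \<rho> \<le> ln (f n)" using c rho by (simp add: ln_mult ln_realpow)
    then have "(ln c + real n * ln \<rho>) / real n \<le> ln (f n) / real n"
      using elim by (intro divide_right_mono) auto
    then have "ln c / real n + ln \<rho> \<le> ln (f n) / real n"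
      using elim by (simp add: add_divide_distrib)
    then show ?case using elim by linarith
  qed
qed

lemma eventually_ln_div_real_lt:
  fixes f :: "nat \<Rightarrow> real"
  assumes r: "r > 0" and pos: "\<forall>\<^sub>F n in sequentially. f n > 0"
    and upper: "\<forall>\<^sub>F n in sequentially. f n \<le> C * r ^ n" and a: "ln r < a"
  shows "\<forall>\<^sub>F n in sequentially. ln (f n) / real n < a"
proof -
  define C' where "C' = max C 1"
  have "\<forall>\<^sub>F n in sequentially. ln C' / real n < a - ln r"
    using order_tendstoD(2)[OF tendsto_const_div_real[of "ln C'"]] a by simp
  then show ?thesis using pos upper eventually_gt_at_top[of 0]
  proof eventually_elim
    case (elim n)
    have "C * r ^ n \<le> C' * r ^ n" using r by (intro mult_right_mono) (auto simp: C'_def)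
    then have "f n \<le> C' * r ^ n" using elim by linarith
    then have "ln (f n) \<le> ln (C' * r ^ n)"
      using elim by (subst ln_le_cancel_iff) (auto simp: C'_def r)
    also have "\<dots> = ln C' + real n * ln r"
      using r by (subst ln_mult) (auto simp: C'_def ln_realpow)
    finally have "ln (f n) / real n \<le> (ln C' + real n * ln r) / real n"
      using elim by (intro divide_right_mono) auto
    then have "ln (f n) / real n \<le> ln C' / real n + ln r" using elim by (simp add: add_divide_distrib)
    then show ?case using elim by linarith
  qed
qed

lemma exponential_growth_rate:
  fixes f :: "nat \<Rightarrow> real"
  assumes rho: "\<rho> > 0"
    and lower: "\<exists>c>0. \<forall>\<^sub>F n in sequentially. f n \<ge> c * \<rho> ^ n"
    and upper: "\<And>r. r > \<rho> \<Longrightarrow> \<exists>C. \<forall>\<^sub>F n in sequentially. f n \<le> C * r ^ n"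
  shows "(\<lambda>n. ln (f n) / real n) \<longlonglongrightarrow> ln \<rho>"
proof (rule order_tendstoI)
  obtain c where c: "c > 0" and cl: "\<forall>\<^sub>F n in sequentially. f n \<ge> c * \<rho> ^ n" using lower by blast
  fix a
  show "\<forall>\<^sub>F n in sequentially. a < ln (f n) / real n" if "a < ln \<rho>"
    using eventually_gt_ln_div_real[OF c rho cl that] .
  show "\<forall>\<^sub>F n in sequentially. ln (f n) / real n < a" if a: "a > ln \<rho>"
  proof -
    define r where "r = exp ((ln \<rho> + a) / 2)"
    have "exp (ln \<rho>) < r" using a unfolding r_def by simp
    then have "r > \<rho>" using rho by simp
    then obtain C where C: "\<forall>\<^sub>F n in sequentially. f n \<le> C * r ^ n" using upper by blast
    have "\<forall>\<^sub>F n in sequentially. f n > 0"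
      using cl
    proof eventually_elim
      case (elim n)
      have "c * \<rho> ^ n > 0" using c rho by simp
      then show ?case using elim by linarith
    qed
    moreover have "ln r < a" using a by (simp add: r_def)
    ultimately show ?thesis using eventually_ln_div_real_lt[OF _ _ C] by (simp add: r_def)
  qed
qed

lemma card_lang_sft_lower_bound:
  assumes fin: "finite I" and ne: "I \<noteq> {}" and zo: "zero_one_mat I M" and pos: "spec_rad I M > 0"
  shows "\<exists>c>0. \<forall>\<^sub>F n in sequentially. real (card (lang (sft I M) n)) \<ge> c * spec_rad I M ^ n"
proof -
  define \<rho> where "\<rho> = spec_rad I M"
  obtain K where K: "\<forall>k. card (walks I M (k + K)) \<le> card (lang (sft I M) (Suc k)) * card I ^ K"
    using card_walks_le_card_lang[OF fin] by blast
  have cI: "real (card I) > 0" using fin ne by (simp add: card_gt_0_iff)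
  define c where "c = \<rho> ^ K / (\<rho> * real (card I) ^ K)"
  have "c * \<rho> ^ Suc k \<le> real (card (lang (sft I M) (Suc k)))" for k
  proof -
    have "\<rho> ^ (k + K) \<le> real (card (walks I M (k + K)))"
      using spec_rad_power_le_card_walks[OF fin ne zo] unfolding \<rho>_def .
    also have "\<dots> \<le> real (card (lang (sft I M) (Suc k))) * real (card I) ^ K"
      using K by (metis of_nat_le_iff of_nat_mult of_nat_power)
    finally have "\<rho> ^ (k + K) \<le> real (card (lang (sft I M) (Suc k))) * real (card I) ^ K" .
    moreover have "c * \<rho> ^ Suc k = \<rho> ^ (k + K) / real (card I) ^ K"
      using pos by (simp add: c_def \<rho>_def power_add field_simps)
    ultimately show ?thesis using cI by (simp add: divide_le_eq)
  qed
  then have "\<forall>\<^sub>F n in sequentially. real (card (lang (sft I M) n)) \<ge> c * \<rho> ^ n"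
    by (subst eventually_sequentially_Suc[symmetric]) (simp add: always_eventually)
  moreover have "c > 0" using pos cI by (simp add: c_def \<rho>_def)
  ultimately show ?thesis unfolding \<rho>_def by blast
qed

lemma card_lang_sft_upper_bound:
  assumes fin: "finite I" and ne: "I \<noteq> {}" and zo: "zero_one_mat I M" and r: "spec_rad I M < r"
  shows "\<exists>C. \<forall>\<^sub>F n in sequentially. real (card (lang (sft I M) n)) \<le> C * r ^ n"
proof -
  obtain C where C: "\<forall>k. real (card (walks I M k)) \<le> C * r ^ k"
    using card_walks_bounded_by_power[OF fin ne zo r] by blast
  have r0: "r > 0" using spec_rad_nonneg[OF fin ne, of M] r by linarith
  have "real (card (lang (sft I M) (Suc k))) \<le> (C / r) * r ^ Suc k" for k
  proof -
    have "real (card (lang (sft I M) (Suc k))) \<le> real (card (walks I M k))"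
      using lang_sft_subset_walks finite_walks[OF fin] by (intro of_nat_mono card_mono) auto
    also have "\<dots> \<le> C * r ^ k" using C by blast
    finally show ?thesis using r0 by simp
  qed
  then have "\<forall>\<^sub>F n in sequentially. real (card (lang (sft I M) n)) \<le> (C / r) * r ^ n"
    by (subst eventually_sequentially_Suc[symmetric]) (simp add: always_eventually)
  then show ?thesis by blast
qed

lemma htop_sft:
  assumes fin: "finite I" and ne: "I \<noteq> {}" and zo: "zero_one_mat I M" and pos: "spec_rad I M > 0"
  shows "htop (sft I M) = ln (spec_rad I M)"
proof -
  have "(\<lambda>n. ln (real (card (lang (sft I M) n))) / real n) \<longlonglongrightarrow> ln (spec_rad I M)"
    by (rule exponential_growth_rate[OF pos card_lang_sft_lower_bound[OF assms]])
      (rule card_lang_sft_upper_bound[OF fin ne zo])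
  then show ?thesis unfolding htop_def by (rule limI)
qed

section \<open>Measurability of cylinders and survivor sets\<close>

abbreviation seq_space :: "(nat \<Rightarrow> nat) measure" where
  "seq_space \<equiv> PiM UNIV (\<lambda>_::nat. count_space (UNIV::nat set))"

lemma space_seq_space: "space seq_space = UNIV"
  by (simp add: space_PiM)

lemma coordinate_set_in_sets: "{x::nat\<Rightarrow>nat. P (x i)} \<in> sets seq_space"
proof -
  have "{x::nat\<Rightarrow>nat. P (x i)} = (\<lambda>x. x i) -` {a. P a} \<inter> space seq_space"
    by (auto simp: space_seq_space)
  also have "\<dots> \<in> sets seq_space"
    by (rule measurable_sets[OF measurable_component_singleton]) auto
  finally show ?thesis .
qed

lemma coordinate_pair_set_in_sets: "{x::nat\<Rightarrow>nat. Q (x i) (x j)} \<in> sets seq_space"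
proof -
  have "{x::nat\<Rightarrow>nat. Q (x i) (x j)} = (\<Union>a. {x. x i = a} \<inter> {x. Q a (x j)})" by auto
  also have "\<dots> \<in> sets seq_space"
    using coordinate_set_in_sets by (intro sets.countable_UN sets.Int) auto
  finally show ?thesis .
qed

lemma sft_in_sets: "sft I A \<in> sets seq_space"
proof -
  have "sft I A = (\<Inter>n. {x. x n \<in> I} \<inter> {x. A (x n) (x (Suc n)) = 1})" by (auto simp: sft_def)
  also have "\<dots> \<in> sets seq_space"
    using coordinate_set_in_sets coordinate_pair_set_in_sets by (intro sets.countable_INT sets.Int) auto
  finally show ?thesis .
qed

lemma cyl_in_sets: "cyl (sft I A) w \<in> sets seq_space"
proof -
  have "cyl (sft I A) w = sft I A \<inter> (\<Inter>i. {x. i < length w \<longrightarrow> x i = w ! i})" by (auto simp: cyl_def)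
  also have "\<dots> \<in> sets seq_space"
    using coordinate_set_in_sets sft_in_sets by (intro sets.Int sets.countable_INT) auto
  finally show ?thesis .
qed

lemma shiftn_sft: "x \<in> sft I A \<Longrightarrow> shiftn i x \<in> sft I A"
  by (auto simp: sft_def shiftn_def)

lemma survivors_in_sets:
  assumes "finite G" "G \<noteq> {}"
  shows "survivors (sft I A) G m \<in> sets seq_space"
proof -
  define C where "C = (\<lambda>i w. \<Inter>j. {x::nat\<Rightarrow>nat. j < length w \<longrightarrow> x (j + i) = w ! j})"
  have "survivors (sft I A) G m = sft I A \<inter> (\<Inter>i\<in>{..m}. \<Inter>w\<in>G. space seq_space - C i w)"
    unfolding survivors_def hole_def cyl_def C_def using shiftn_sft[unfolded shiftn_def, of _ I A]
    by (auto simp: shiftn_def space_seq_space) blast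
  moreover have "C i w \<in> sets seq_space" for i w
    unfolding C_def by (rule sets.countable_INT) (auto intro: coordinate_set_in_sets)
  then have "(\<Inter>w\<in>G. space seq_space - C i w) \<in> sets seq_space" for i
    using sets.finite_INT[OF assms] by blast
  then have "(\<Inter>i\<in>{..m}. \<Inter>w\<in>G. space seq_space - C i w) \<in> sets seq_space"
    using sets.finite_INT[of "{..m}"] by blast
  ultimately show ?thesis using sft_in_sets by simp
qed

section \<open>The Parry measure\<close>

locale parry_hole =
  fixes N :: nat and A :: "nat \<Rightarrow> nat \<Rightarrow> real" and v p :: "nat \<Rightarrow> real"
    and M :: "(nat \<Rightarrow> nat) measure" and G :: "nat list set"
  assumes N: "N \<ge> 1"
    and A01: "zero_one_mat {..<N} A"
    and Airr: "irreducible_mat {..<N} A"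
    and vpos: "\<forall>i\<in>{..<N}. v i > 0"
    and veig: "\<forall>i\<in>{..<N}. (\<Sum>j\<in>{..<N}. A i j * v j) = spec_rad {..<N} A * v i"
    and pnonneg: "\<forall>i\<in>{..<N}. p i \<ge> 0"
    and psum: "(\<Sum>i\<in>{..<N}. p i) = 1"
    and pstat: "\<forall>j\<in>{..<N}. (\<Sum>i\<in>{..<N}. p i * (A i j * v j / (spec_rad {..<N} A * v i))) = p j"
    and Mprob: "prob_space M"
    and Msets: "sets M = sets seq_space"
    and Mcyl: "\<forall>n\<ge>1. \<forall>w\<in>lang (sft {..<N} A) n.
                 measure M (cyl (sft {..<N} A) w)
                 = p (w ! 0) * (\<Prod>i<n - 1. A (w ! i) (w ! (i + 1)) * v (w ! (i + 1))
                                           / (spec_rad {..<N} A * v (w ! i)))"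
    and Gfin: "finite G" and Gne: "G \<noteq> {}"
    and Gwords: "\<forall>w\<in>G. w \<noteq> [] \<and> w \<in> lang (sft {..<N} A) (length w)"
begin

abbreviation "Sym \<equiv> {..<N}"
abbreviation "XA \<equiv> sft Sym A"
abbreviation "lam \<equiv> spec_rad Sym A"

lemma Sym_nonempty: "Sym \<noteq> {}"
proof -
  have "0 \<in> Sym" using N by simp
  then show ?thesis by blast
qed

lemma A_nonneg: "\<forall>i\<in>Sym. \<forall>j\<in>Sym. A i j \<ge> 0"
  using zero_one_mat_nonneg[OF A01] .

lemma lam_pos: "lam > 0"
proof (rule ccontr)
  assume "\<not> lam > 0"
  then have lam0: "lam = 0" using spec_rad_nonneg[OF _ Sym_nonempty, of A] by simp
  have A0: "A i j = 0" if i: "i \<in> Sym" and j: "j \<in> Sym" for i j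
  proof -
    have "(\<Sum>j\<in>Sym. A i j * v j) = 0" using veig[rule_format, OF i] lam0 by simp
    moreover have "\<forall>j\<in>Sym. A i j * v j \<ge> 0" using A_nonneg vpos i by (simp add: less_imp_le)
    ultimately have "\<forall>j\<in>Sym. A i j * v j = 0"
      using sum_nonneg_eq_0_iff[of Sym "\<lambda>j. A i j * v j"] by simp
    then have "A i j * v j = 0" using j by blast
    moreover have "v j > 0" using vpos j by blast
    ultimately show ?thesis by simp
  qed
  have z: "(0::nat) \<in> Sym" using N by simp
  obtain n where n: "n > 0" "mpow Sym A n 0 0 > 0"
    using Airr z unfolding irreducible_mat_def by blast
  then obtain m where "n = Suc m" using gr0_implies_Suc by blast
  moreover have "mpow Sym A (Suc m) 0 0 = 0" using z A0 by (simp add: sum.neutral)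
  ultimately show False using n by simp
qed

lemma A_has_successor: "i \<in> Sym \<Longrightarrow> \<exists>j\<in>Sym. A i j = 1"
proof (rule ccontr)
  assume i: "i \<in> Sym" and "\<not> (\<exists>j\<in>Sym. A i j = 1)"
  then have "\<forall>j\<in>Sym. A i j = 0" using A01 unfolding zero_one_mat_def by blast
  then have "(\<Sum>j\<in>Sym. A i j * v j) = 0" by simp
  moreover have "lam * v i > 0" using lam_pos vpos i by simp
  ultimately show False using veig[rule_format, OF i] by linarith
qed

lemma extendable_symbol: "j \<in> Sym \<Longrightarrow> extendable Sym A j"
  unfolding extendable_def
proof
  fix k assume j: "j \<in> Sym"
  show "\<exists>w\<in>walks Sym A k. hd w = j"
  proof (induction k)
    case 0 show ?case using j by (intro bexI[of _ "[j]"]) (auto simp: walks_0)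
  next
    case (Suc k)
    then obtain w where w: "w \<in> walks Sym A k" "hd w = j" by blast
    obtain b where b: "b \<in> Sym" "A (last w) b = 1"
      using A_has_successor[OF walks_last_mem[OF w(1)]] by blast
    have "w @ [b] \<in> walks Sym A (Suc k)" using walks_snoc_iff[of w b Sym A k] w b by simp
    moreover have "hd (w @ [b]) = j" using w walks_not_Nil[OF w(1)] by simp
    ultimately show ?case by blast
  qed
qed

lemma lang_XA_Suc: "lang XA (Suc k) = walks Sym A k"
proof
  show "walks Sym A k \<subseteq> lang XA (Suc k)"
  proof
    fix w assume w: "w \<in> walks Sym A k"
    show "w \<in> lang XA (Suc k)"
      using walk_to_extendable_in_lang[OF _ w extendable_symbol[OF walks_last_mem[OF w]]] by simp
  qed
qed (rule lang_sft_subset_walks)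

lemma XA_nonempty: "XA \<noteq> {}"
  using extendable_imp_sft_point[OF _ extendable_symbol[of 0]] N by auto

lemma A_eq_0_into_p_zero:
  assumes l: "l \<in> Sym" "p l > 0" and j: "j \<in> Sym" "p j = 0"
  shows "A l j = 0"
proof -
  have nn: "\<forall>i\<in>Sym. p i * (A i j * v j / (lam * v i)) \<ge> 0"
  proof
    fix i assume i: "i \<in> Sym"
    have "A i j * v j \<ge> 0" using A_nonneg vpos i j(1) by (simp add: less_imp_le)
    moreover have "lam * v i > 0" using lam_pos vpos i by simp
    ultimately show "p i * (A i j * v j / (lam * v i)) \<ge> 0" using pnonneg i by simp
  qed
  have "(\<Sum>i\<in>Sym. p i * (A i j * v j / (lam * v i))) = 0" using pstat j by simp
  then have "\<forall>i\<in>Sym. p i * (A i j * v j / (lam * v i)) = 0"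
    using sum_nonneg_eq_0_iff[of Sym "\<lambda>i. p i * (A i j * v j / (lam * v i))"] nn by simp
  then have "p l * (A l j * v j / (lam * v l)) = 0" using l(1) by blast
  then show ?thesis using l vpos[rule_format, OF l(1)] vpos[rule_format, OF j(1)] lam_pos by simp
qed

text \<open>By stationarity no edge enters the zero set of \<open>p\<close> from outside; irreducibility forbids such a set.\<close>

lemma p_pos: "i \<in> Sym \<Longrightarrow> p i > 0"
proof (rule ccontr)
  assume i: "i \<in> Sym" and "\<not> p i > 0"
  define Z where "Z = {j\<in>Sym. p j = 0}"
  have "i \<in> Z" using i \<open>\<not> p i > 0\<close> pnonneg by (force simp: Z_def)
  have no_edges: "\<forall>l\<in>Sym - Z. \<forall>j\<in>Z. A l j = 0"
    using A_eq_0_into_p_zero pnonneg unfolding Z_def by (force simp: order_le_less)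
  have "\<exists>k\<in>Sym. p k > 0"
  proof (rule ccontr)
    assume "\<not> ?thesis"
    then have "\<forall>k\<in>Sym. p k = 0" using pnonneg by force
    then show False using psum by simp
  qed
  then obtain k where k: "k \<in> Sym" "p k > 0" by blast
  obtain n where "mpow Sym A n k i > 0" using Airr k i unfolding irreducible_mat_def by blast
  moreover have "k \<in> Sym - Z" using k by (auto simp: Z_def)
  ultimately show False using mpow_eq_0_into_closed[OF no_edges _ \<open>i \<in> Z\<close>] by fastforce
qed

lemma prod_parry_telescope:
  assumes "k < length u" "\<forall>i\<le>k. u ! i \<in> Sym" "\<forall>i<k. A (u ! i) (u ! (i+1)) = 1"
  shows "(\<Prod>i<k. A (u ! i) (u ! (i + 1)) * v (u ! (i + 1)) / (lam * v (u ! i)))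
           = v (u ! k) / (v (u ! 0) * lam ^ k)"
  using assms
proof (induction k)
  case 0
  then have "u ! 0 \<in> Sym" by blast
  then show ?case using vpos by (simp add: less_imp_neq[symmetric])
next
  case (Suc k)
  have "v (u ! k) > 0" "v (u ! 0) > 0" using Suc.prems vpos by auto
  moreover have "A (u ! k) (u ! (k+1)) = 1" using Suc.prems by auto
  ultimately show ?case using Suc lam_pos by (simp add: field_simps)
qed

lemma cyl_measure:
  assumes u: "u \<in> lang XA (Suc k)"
  shows "measure M (cyl XA u) = p (u ! 0) * v (last u) / (v (u ! 0) * lam ^ k)"
proof -
  have uw: "u \<in> walks Sym A k" using u lang_XA_Suc by simp
  have len: "length u = Suc k" using uw by (simp add: walks_def)
  have "measure M (cyl XA u)
        = p (u ! 0) * (\<Prod>i<k. A (u ! i) (u ! (i + 1)) * v (u ! (i + 1)) / (lam * v (u ! i)))"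
    using Mcyl u by force
  also have "\<dots> = p (u ! 0) * (v (u ! k) / (v (u ! 0) * lam ^ k))"
    using uw len walks_nth_mem[OF uw] by (subst prod_parry_telescope) (auto simp: walks_def)
  finally show ?thesis using last_eq_nth_length_Suc[OF len] by simp
qed

definition mass_min where "mass_min = Min ((\<lambda>(i,j). p i * v j / v i) ` (Sym \<times> Sym))"
definition mass_max where "mass_max = Max ((\<lambda>(i,j). p i * v j / v i) ` (Sym \<times> Sym))"

lemma mass_min_pos: "mass_min > 0"
  unfolding mass_min_def using Sym_nonempty p_pos vpos by (subst Min_gr_iff) auto

lemma mass_min_le_max: "mass_min \<le> mass_max"
proof -
  have fin: "finite ((\<lambda>(i,j). p i * v j / v i) ` (Sym \<times> Sym))" by simp
  obtain x where x: "x \<in> (\<lambda>(i,j). p i * v j / v i) ` (Sym \<times> Sym)" using Sym_nonempty by blast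
  show ?thesis unfolding mass_min_def mass_max_def using Min_le[OF fin x] Max_ge[OF fin x] by linarith
qed

lemma cyl_measure_bounds:
  assumes u: "u \<in> lang XA (Suc k)"
  shows "mass_min / lam ^ k \<le> measure M (cyl XA u)" "measure M (cyl XA u) \<le> mass_max / lam ^ k"
proof -
  have uw: "u \<in> walks Sym A k" using u lang_XA_Suc by simp
  define q where "q = p (u ! 0) * v (last u) / v (u ! 0)"
  have eq: "measure M (cyl XA u) = q / lam ^ k" using cyl_measure[OF u] by (simp add: q_def)
  have "q \<in> (\<lambda>(i,j). p i * v j / v i) ` (Sym \<times> Sym)"
    using walks_nth_mem[OF uw, of 0] walks_last_mem[OF uw] unfolding q_def by force
  then have "mass_min \<le> q" "q \<le> mass_max"
    unfolding mass_min_def mass_max_def by (auto intro: Min_le Max_ge)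
  then show "mass_min / lam ^ k \<le> measure M (cyl XA u)" "measure M (cyl XA u) \<le> mass_max / lam ^ k"
    unfolding eq using lam_pos by (auto intro!: divide_right_mono)
qed

lemma finite_measure_M: "finite_measure M"
  using Mprob by (simp add: prob_space_def)

lemma measure_UN_cyl:
  assumes "F \<subseteq> lang XA n"
  shows "measure M (\<Union>u\<in>F. cyl XA u) = (\<Sum>u\<in>F. measure M (cyl XA u))"
proof (rule measure_finite_Union)
  show "finite F" using finite_subset[OF assms finite_lang_sft] by simp
  show "cyl XA ` F \<subseteq> sets M" using cyl_in_sets Msets by auto
  show "disjoint_family_on (cyl XA) F"
    unfolding disjoint_family_on_def
  proof (intro ballI impI)
    fix u u' assume u: "u \<in> F" and u': "u' \<in> F" and "u \<noteq> u'"
    have "length u = n" "length u' = n" using u u' assms length_lang by auto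
    then have "cyl XA u \<inter> cyl XA u' \<noteq> {} \<Longrightarrow> u = u'"
      by (auto simp: cyl_def intro!: nth_equalityI)
    then show "cyl XA u \<inter> cyl XA u' = {}" using \<open>u \<noteq> u'\<close> by blast
  qed
  show "emeasure M (cyl XA u) \<noteq> \<infinity>" for u
    using finite_measure.emeasure_finite[OF finite_measure_M] by simp
qed

section \<open>Survivors and words avoiding the hole\<close>

definition avoids :: "nat list \<Rightarrow> bool" where
  "avoids u \<longleftrightarrow> \<not> (\<exists>g\<in>G. sublist g u)"

definition avoiding :: "nat \<Rightarrow> nat list set" where
  "avoiding n = {u \<in> lang XA n. avoids u}"

lemma G_length: "g \<in> G \<Longrightarrow> 1 \<le> length g \<and> length g \<le> maxlen G"
proof -
  assume g: "g \<in> G"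
  have "g \<noteq> []" using Gwords g by blast
  moreover have "length g \<le> maxlen G" unfolding maxlen_def using Gfin g by (intro Max_ge) auto
  ultimately show ?thesis by (cases g) auto
qed

lemma maxlen_pos: "maxlen G \<ge> 1"
  using G_length Gne by fastforce

lemma UN_avoiding_subset_survivors: "(\<Union>u\<in>avoiding (m + maxlen G). cyl XA u) \<subseteq> survivors XA G m"
proof
  fix x assume "x \<in> (\<Union>u\<in>avoiding (m + maxlen G). cyl XA u)"
  then obtain u where u: "u \<in> avoiding (m + maxlen G)" and x: "x \<in> cyl XA u" by blast
  have xX: "x \<in> XA" and xu: "\<forall>i<length u. x i = u ! i" using x by (auto simp: cyl_def)
  have lu: "length u = m + maxlen G" and au: "avoids u"
    using u length_lang unfolding avoiding_def by auto
  have "shiftn i x \<notin> hole XA G" if i: "i \<le> m" for i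
  proof
    assume "shiftn i x \<in> hole XA G"
    then obtain g where g: "g \<in> G" "shiftn i x \<in> cyl XA g" unfolding hole_def by blast
    have xg: "\<forall>j<length g. x (j + i) = g ! j" using g(2) by (auto simp: cyl_def shiftn_def)
    have lg: "length g \<le> maxlen G" using G_length[OF g(1)] by simp
    have "g = take (length g) (drop i u)"
      using lg lu i xu xg by (intro nth_equalityI) (auto simp: add.commute)
    then have "sublist g u" by (metis sublist_drop sublist_take sublist_order.order_trans)
    then show False using au g(1) unfolding avoids_def by blast
  qed
  then show "x \<in> survivors XA G m" using xX unfolding survivors_def by blast
qed

lemma survivors_subset_UN_avoiding: "survivors XA G m \<subseteq> (\<Union>u\<in>avoiding (Suc m). cyl XA u)"
proof
  fix x assume "x \<in> survivors XA G m"
  then have xX: "x \<in> XA" and xs: "\<forall>i\<le>m. shiftn i x \<notin> hole XA G" unfolding survivors_def by auto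
  define u where "u = map x [0..<Suc m]"
  have lu: "length u = Suc m" by (simp add: u_def)
  have un: "u ! i = x i" if "i < Suc m" for i using that by (simp add: u_def nth_map_upt del: upt_Suc)
  have "u \<in> lang XA (Suc m)" unfolding lang_def using xX lu by (auto simp: u_def intro!: exI[of _ 0])
  moreover have "avoids u" unfolding avoids_def
  proof
    assume "\<exists>g\<in>G. sublist g u"
    then obtain g ps ss where g: "g \<in> G" and us: "u = ps @ g @ ss" unfolding sublist_def by blast
    have "length ps \<le> m" using lu us G_length[OF g] by simp
    moreover have "shiftn (length ps) x \<in> cyl XA g"
    proof -
      have "shiftn (length ps) x j = g ! j" if "j < length g" for j
        using un[of "length ps + j"] lu us that by (simp add: shiftn_def add.commute nth_append)
      then show ?thesis using shiftn_sft[OF xX] by (auto simp: cyl_def)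
    qed
    ultimately show False using xs g unfolding hole_def by blast
  qed
  moreover have "x \<in> cyl XA u" using xX un lu by (auto simp: cyl_def)
  ultimately show "x \<in> (\<Union>u\<in>avoiding (Suc m). cyl XA u)" unfolding avoiding_def by blast
qed

lemma survivors_measure_ge:
  "real (card (avoiding (m + maxlen G))) * mass_min / lam ^ (m + maxlen G - 1)
     \<le> measure M (survivors XA G m)"
proof -
  obtain k where k: "m + maxlen G = Suc k" using maxlen_pos by (metis add_is_0 not_one_le_zero not0_implies_Suc)
  have sub: "avoiding (m + maxlen G) \<subseteq> lang XA (Suc k)" unfolding avoiding_def k by auto
  have "real (card (avoiding (m + maxlen G))) * mass_min / lam ^ k
        = (\<Sum>u\<in>avoiding (m + maxlen G). mass_min / lam ^ k)" by simp
  also have "\<dots> \<le> (\<Sum>u\<in>avoiding (m + maxlen G). measure M (cyl XA u))"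
    using cyl_measure_bounds(1) sub by (intro sum_mono) auto
  also have "\<dots> = measure M (\<Union>u\<in>avoiding (m + maxlen G). cyl XA u)"
    using measure_UN_cyl[OF sub] by simp
  also have "\<dots> \<le> measure M (survivors XA G m)"
    using finite_measure.finite_measure_mono[OF finite_measure_M UN_avoiding_subset_survivors]
      survivors_in_sets[OF Gfin Gne] Msets by simp
  finally show ?thesis using k by simp
qed

lemma survivors_measure_le:
  "measure M (survivors XA G m) \<le> real (card (avoiding (Suc m))) * mass_max / lam ^ m"
proof -
  have sub: "avoiding (Suc m) \<subseteq> lang XA (Suc m)" unfolding avoiding_def by auto
  have "(\<Union>u\<in>avoiding (Suc m). cyl XA u) \<in> sets M"
    using cyl_in_sets Msets finite_subset[OF sub finite_lang_sft] by (intro sets.finite_UN) auto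
  then have "measure M (survivors XA G m) \<le> measure M (\<Union>u\<in>avoiding (Suc m). cyl XA u)"
    using finite_measure.finite_measure_mono[OF finite_measure_M survivors_subset_UN_avoiding] by simp
  also have "\<dots> = (\<Sum>u\<in>avoiding (Suc m). measure M (cyl XA u))" using measure_UN_cyl[OF sub] .
  also have "\<dots> \<le> (\<Sum>u\<in>avoiding (Suc m). mass_max / lam ^ m)"
    using cyl_measure_bounds(2) sub by (intro sum_mono) auto
  finally show ?thesis by simp
qed

end

section \<open>The higher block presentation of the \<open>\<G>\<close>-free words\<close>

lemma sublist_singleton_iff: "sublist [c] xs \<longleftrightarrow> c \<in> set xs"
proof
  assume "sublist [c] xs" then show "c \<in> set xs" using set_mono_sublist by fastforce
next
  assume "c \<in> set xs"
  then obtain ys zs where "xs = ys @ c # zs" by (meson split_list)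
  then show "sublist [c] xs" by (metis append_Cons append_Nil sublist_appendI)
qed

context parry_hole
begin

definition block_len :: nat where
  "block_len = (if maxlen G \<ge> 2 then maxlen G - 1 else 1)"

lemma block_len_pos: "block_len \<ge> 1"
  unfolding block_len_def by auto

lemma maxlen_le_Suc_block_len: "maxlen G \<le> Suc block_len"
  by (simp add: block_len_def)

lemma block_len_le_maxlen: "block_len \<le> maxlen G"
  using maxlen_pos by (simp add: block_len_def)

abbreviation "BI \<equiv> B_index XA G"
abbreviation "BM \<equiv> B_mat XA G"
abbreviation "B_walks \<equiv> walks BI BM"

lemma B_index_eq: "BI = lang XA block_len"
  unfolding B_index_def block_len_def by simp

definition allowed :: "nat list \<Rightarrow> bool" where
  "allowed u \<longleftrightarrow> set u \<subseteq> Sym \<and> (\<forall>i. Suc i < length u \<longrightarrow> A (u ! i) (u ! Suc i) = 1)"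

lemma lang_XA_eq_allowed: "lang XA n = {u. length u = n \<and> allowed u}"
proof (cases n)
  case 0
  obtain x where x: "x \<in> XA" using XA_nonempty by blast
  have "[] \<in> lang XA 0" unfolding lang_def using x by (auto intro!: bexI[of _ x])
  moreover have "lang XA 0 \<subseteq> {[]}" unfolding lang_def by auto
  ultimately show ?thesis using 0 by (auto simp: allowed_def)
next
  case (Suc k)
  then show ?thesis using lang_XA_Suc[of k] unfolding walks_def allowed_def by auto
qed

lemma allowed_snoc_iff:
  "allowed (u @ [b]) \<longleftrightarrow> allowed u \<and> b \<in> Sym \<and> (u \<noteq> [] \<longrightarrow> A (last u) b = 1)"
proof
  assume h: "allowed (u @ [b])"
  have "A (u ! i) (u ! Suc i) = 1" if i: "Suc i < length u" for i
  proof -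
    have "A ((u@[b]) ! i) ((u@[b]) ! Suc i) = 1" using h i unfolding allowed_def by simp
    then show ?thesis using i by (simp add: nth_append)
  qed
  moreover have "A (last u) b = 1" if "u \<noteq> []"
  proof -
    obtain k where k: "length u = Suc k" using \<open>u \<noteq> []\<close> by (cases u) auto
    then have "A ((u@[b]) ! k) ((u@[b]) ! Suc k) = 1" using h unfolding allowed_def by simp
    then show ?thesis using last_eq_nth_length_Suc[OF k] k by (simp add: nth_append)
  qed
  ultimately show "allowed u \<and> b \<in> Sym \<and> (u \<noteq> [] \<longrightarrow> A (last u) b = 1)"
    using h unfolding allowed_def by auto
next
  assume h: "allowed u \<and> b \<in> Sym \<and> (u \<noteq> [] \<longrightarrow> A (last u) b = 1)"
  have "A ((u@[b]) ! i) ((u@[b]) ! Suc i) = 1" if i: "Suc i < length (u @ [b])" for i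
  proof (cases "Suc i < length u")
    case True then show ?thesis using h unfolding allowed_def by (simp add: nth_append)
  next
    case False
    then have il: "Suc i = length u" using i by simp
    then have "u \<noteq> []" by auto
    then show ?thesis using h il last_eq_nth_length_Suc[of u i] by (simp add: nth_append)
  qed
  then show "allowed (u @ [b])" using h unfolding allowed_def by auto
qed

lemma allowed_drop: "allowed u \<Longrightarrow> allowed (drop n u)"
  unfolding allowed_def by (auto dest: in_set_dropD simp: add.commute[of n])

lemma avoids_sublist: "avoids w \<Longrightarrow> sublist u w \<Longrightarrow> avoids u"
  unfolding avoids_def using sublist_order.order_trans by blast

text \<open>Every word of \<open>\<G>\<close> has length at most \<open>block_len + 1\<close>, so an occurrence in \<open>u @ [b]\<close>
  either lies in \<open>u\<close> or in its last \<open>block_len + 1\<close> letters.\<close>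

lemma avoids_snoc:
  assumes l: "length u \<ge> block_len" and short_or_avoids: "length u \<le> block_len \<or> avoids u"
    and av: "avoids (drop (length u - block_len) u @ [b])"
  shows "avoids (u @ [b])"
  unfolding avoids_def
proof
  assume "\<exists>g\<in>G. sublist g (u @ [b])"
  then obtain g where g: "g \<in> G" "sublist g (u @ [b])" by blast
  define V where "V = drop (length u - block_len) u @ [b]"
  have sV: "suffix V (u @ [b])" using l suffix_drop[of "length u - block_len" "u @ [b]"] by (simp add: V_def)
  have lV: "length V = Suc block_len" using l by (simp add: V_def)
  have lg: "length g \<le> Suc block_len" using G_length[OF g(1)] maxlen_le_Suc_block_len by simp
  from g(2) have "suffix g (u @ [b]) \<or> sublist g u" by (simp add: sublist_snoc)
  then show False
  proof
    assume "suffix g (u @ [b])"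
    then have "suffix g V \<or> suffix V g" using suffix_same_cases sV by blast
    then have "sublist g V" using lg lV by (auto simp: suffix_def)
    then show False using av g(1) unfolding avoids_def V_def by blast
  next
    assume su: "sublist g u"
    show False
    proof (cases "length u \<le> block_len")
      case True
      then have "V = u @ [b]" using l by (simp add: V_def)
      then have "sublist g V" using su by (metis sublist_append_rightI sublist_order.order_trans)
      then show False using av g(1) unfolding avoids_def V_def by blast
    next
      case False
      then show False using short_or_avoids su g(1) unfolding avoids_def by blast
    qed
  qed
qed

lemma B_index_props: "X \<in> BI \<Longrightarrow> length X = block_len \<and> X \<noteq> [] \<and> allowed X"
  using block_len_pos unfolding B_index_eq lang_XA_eq_allowed by auto

lemma B_mat_eq:
  assumes U: "U \<in> BI" and V: "V \<in> BI"
  shows "BM U V = (if tl U = butlast V \<and> U @ [last V] \<in> lang XA (Suc block_len)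
                      \<and> avoids (U @ [last V]) then 1 else 0)"
proof (cases "maxlen G \<ge> 2")
  case True
  then have "Suc block_len = maxlen G" by (simp add: block_len_def)
  moreover have "U \<noteq> []" "V \<noteq> []" using B_index_props U V by auto
  ultimately show ?thesis using True unfolding B_mat_def avoids_def by simp
next
  case False
  then have r1: "maxlen G = 1" using maxlen_pos by simp
  then have s1: "block_len = 1" by (simp add: block_len_def)
  obtain a where a: "U = [a]" using B_index_props[OF U] s1 by (cases U) auto
  obtain b where b: "V = [b]" using B_index_props[OF V] s1 by (cases V) auto
  have G1: "\<forall>g\<in>G. length g = 1" using G_length r1 by force
  have "avoids [a, b] \<longleftrightarrow> [a] \<notin> G \<and> [b] \<notin> G"
  proof
    assume "avoids [a, b]"
    then show "[a] \<notin> G \<and> [b] \<notin> G" unfolding avoids_def by (auto simp: sublist_singleton_iff)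
  next
    assume h: "[a] \<notin> G \<and> [b] \<notin> G"
    show "avoids [a, b]" unfolding avoids_def
    proof
      assume "\<exists>g\<in>G. sublist g [a, b]"
      then obtain g where g: "g \<in> G" "sublist g [a, b]" by blast
      then obtain c where "g = [c]" using G1 by (metis length_0_conv length_Suc_conv One_nat_def)
      then show False using g h by (auto simp: sublist_singleton_iff)
    qed
  qed
  then show ?thesis using False r1 s1 unfolding B_mat_def a b by (simp add: numeral_2_eq_2)
qed

lemma B_matE:
  assumes "U \<in> BI" "V \<in> BI" "BM U V = 1"
  shows "tl U = butlast V" "U @ [last V] \<in> lang XA (Suc block_len)" "avoids (U @ [last V])"
  using assms B_mat_eq[OF assms(1,2)] by (auto split: if_splits)

text \<open>A walk \<open>X\<^sub>0 \<dots> X\<^sub>k\<close> of overlapping blocks is glued to the word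
  \<open>X\<^sub>0 (last X\<^sub>1) \<dots> (last X\<^sub>k)\<close> of length \<open>k + block_len\<close>.\<close>

definition glue :: "nat list list \<Rightarrow> nat list" where
  "glue Xs = hd Xs @ map last (tl Xs)"

lemma glue_snoc: "Xs \<noteq> [] \<Longrightarrow> glue (Xs @ [Y]) = glue Xs @ [last Y]"
  unfolding glue_def by (cases Xs) auto

text \<open>Blocks shorter than a word of \<open>\<G>\<close> need not avoid \<open>\<G>\<close>, whence the second disjunct.\<close>

definition avoiding_or_short :: "nat \<Rightarrow> nat list set" where
  "avoiding_or_short n = {u \<in> lang XA n. n \<le> block_len \<or> avoids u}"

lemma avoiding_or_short_block_len: "avoiding_or_short block_len = BI"
  unfolding avoiding_or_short_def B_index_eq by auto

lemma glue_B_walk: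
  "Xs \<in> B_walks k \<Longrightarrow> glue Xs \<in> avoiding_or_short (k + block_len) \<and> last Xs = drop k (glue Xs)"
proof (induction k arbitrary: Xs)
  case 0
  then obtain X where "X \<in> BI" "Xs = [X]" by (auto simp: walks_0)
  then show ?case using avoiding_or_short_block_len by (simp add: glue_def)
next
  case (Suc k)
  obtain Xs' Y where Xs: "Xs = Xs' @ [Y]" and Xs': "Xs' \<in> B_walks k" and Y: "Y \<in> BI"
    and B: "BM (last Xs') Y = 1"
    using Suc.prems by (rule walks_SucE)
  define u where "u = glue Xs'"
  define U where "U = last Xs'"
  define b where "b = last Y"
  have u: "u \<in> avoiding_or_short (k + block_len)" and Ud: "U = drop k u"
    using Suc.IH[OF Xs'] by (auto simp: u_def U_def)
  have UB: "U \<in> BI" using walks_last_mem[OF Xs'] by (simp add: U_def)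
  have cond: "tl U = butlast Y" "U @ [b] \<in> lang XA (Suc block_len)" "avoids (U @ [b])"
    using B_matE[OF UB Y] B unfolding U_def b_def by auto
  have lu: "length u = k + block_len" and au: "allowed u"
    using u unfolding avoiding_or_short_def lang_XA_eq_allowed by auto
  have lastU: "last U = last u" unfolding Ud using lu block_len_pos by simp
  have "allowed (U @ [b])" using cond(2) unfolding lang_XA_eq_allowed by simp
  then have "allowed (u @ [b])"
    using allowed_snoc_iff[of u b] allowed_snoc_iff[of U b] au lastU B_index_props[OF UB] by auto
  moreover have "avoids (u @ [b])"
  proof (rule avoids_snoc)
    show "block_len \<le> length u" "avoids (drop (length u - block_len) u @ [b])"
      using lu cond(3) Ud by simp_all
    show "length u \<le> block_len \<or> avoids u" using u lu unfolding avoiding_or_short_def by auto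
  qed
  moreover have "drop (Suc k) (u @ [b]) = Y"
  proof -
    have "drop (Suc k) (u @ [b]) = tl U @ [b]"
      unfolding Ud using lu block_len_pos by (simp add: drop_Suc tl_drop)
    then show ?thesis using cond(1) B_index_props[OF Y] unfolding b_def by simp
  qed
  ultimately have "u @ [b] \<in> avoiding_or_short (Suc k + block_len)" "last Xs = drop (Suc k) (u @ [b])"
    using lu Xs unfolding avoiding_or_short_def lang_XA_eq_allowed by simp_all
  moreover have "glue Xs = u @ [b]" unfolding Xs u_def b_def using walks_not_Nil[OF Xs'] by (rule glue_snoc)
  ultimately show ?case by simp
qed

lemma inj_on_glue: "inj_on glue (B_walks k)"
proof (induction k)
  case 0
  then show ?case by (auto simp: walks_0 inj_on_def glue_def)
next
  case (Suc k)
  show ?case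
  proof (rule inj_onI)
    fix X1 X2 assume X1: "X1 \<in> B_walks (Suc k)" and X2: "X2 \<in> B_walks (Suc k)" and eq: "glue X1 = glue X2"
    obtain Xs1 Y1 where e1: "X1 = Xs1 @ [Y1]" and Xs1: "Xs1 \<in> B_walks k" and Y1: "Y1 \<in> BI"
      and B1: "BM (last Xs1) Y1 = 1"
      using X1 by (rule walks_SucE)
    obtain Xs2 Y2 where e2: "X2 = Xs2 @ [Y2]" and Xs2: "Xs2 \<in> B_walks k" and Y2: "Y2 \<in> BI"
      and B2: "BM (last Xs2) Y2 = 1"
      using X2 by (rule walks_SucE)
    have "glue Xs1 @ [last Y1] = glue Xs2 @ [last Y2]"
      using eq glue_snoc walks_not_Nil[OF Xs1] walks_not_Nil[OF Xs2] unfolding e1 e2 by simp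
    then have xs: "Xs1 = Xs2" and l: "last Y1 = last Y2"
      using Suc.IH Xs1 Xs2 unfolding inj_on_def by auto
    have "Y1 = butlast Y1 @ [last Y1]" using B_index_props[OF Y1] by simp
    also have "\<dots> = butlast Y2 @ [last Y2]"
      using B_matE(1)[OF walks_last_mem[OF Xs1] Y1 B1] B_matE(1)[OF walks_last_mem[OF Xs2] Y2 B2] xs l
      by simp
    also have "\<dots> = Y2" using B_index_props[OF Y2] by simp
    finally show "X1 = X2" using e1 e2 xs by simp
  qed
qed

lemma avoiding_or_short_subset_glue: "avoiding_or_short (k + block_len) \<subseteq> glue ` B_walks k"
proof (induction k)
  case 0
  show ?case
  proof
    fix u assume "u \<in> avoiding_or_short (0 + block_len)"
    then have "u \<in> BI" using avoiding_or_short_block_len by simp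
    then show "u \<in> glue ` B_walks 0" unfolding walks_0 by (auto simp: glue_def intro!: image_eqI[of _ _ "[u]"])
  qed
next
  case (Suc k)
  show ?case
  proof
    fix w assume "w \<in> avoiding_or_short (Suc k + block_len)"
    then have lw: "length w = Suc k + block_len" and ww: "allowed w" and aw: "avoids w"
      using block_len_pos unfolding avoiding_or_short_def lang_XA_eq_allowed by auto
    obtain u b where e: "w = u @ [b]" using lw by (cases w rule: rev_exhaust) auto
    have lu: "length u = k + block_len" using lw e by simp
    have "allowed u" using ww allowed_snoc_iff e by blast
    moreover have "avoids u" using aw avoids_sublist e by (metis sublist_append_rightI)
    ultimately have "u \<in> avoiding_or_short (k + block_len)"
      unfolding avoiding_or_short_def lang_XA_eq_allowed using lu by simp
    then obtain Xs where Xs: "Xs \<in> B_walks k" and u: "u = glue Xs" using Suc.IH by blast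
    define U where "U = last Xs"
    have Ud: "U = drop k u" using glue_B_walk[OF Xs] u by (simp add: U_def)
    have UB: "U \<in> BI" using walks_last_mem[OF Xs] by (simp add: U_def)
    define Y where "Y = tl U @ [b]"
    have dSk: "drop (Suc k) w = Y"
      unfolding Y_def e Ud using lu block_len_pos by (simp add: drop_Suc tl_drop)
    have dk: "drop k w = U @ [b]" unfolding e Ud using lu by simp
    have lU: "length U = block_len" using B_index_props[OF UB] by simp
    have YB: "Y \<in> BI"
      using allowed_drop[OF ww, of "Suc k"] dSk lU block_len_pos
      unfolding B_index_eq lang_XA_eq_allowed by (auto simp: Y_def)
    have "U @ [b] \<in> lang XA (Suc block_len)"
      using allowed_drop[OF ww, of k] dk lU unfolding lang_XA_eq_allowed by simp
    moreover have "avoids (U @ [b])" using avoids_sublist[OF aw] dk by (metis sublist_drop)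
    ultimately have "BM U Y = 1" using B_mat_eq[OF UB YB] by (simp add: Y_def)
    then have "Xs @ [Y] \<in> B_walks (Suc k)"
      using walks_snoc_iff[of Xs Y BI BM k] Xs YB unfolding U_def by simp
    moreover have "glue (Xs @ [Y]) = w" using glue_snoc[OF walks_not_Nil[OF Xs]] u e by (simp add: Y_def)
    ultimately show "w \<in> glue ` B_walks (Suc k)" by (metis image_eqI)
  qed
qed

lemma card_avoiding_eq_card_B_walks:
  assumes "k \<ge> 1"
  shows "card (avoiding (k + block_len)) = card (B_walks k)"
proof -
  have "avoiding (k + block_len) = avoiding_or_short (k + block_len)"
    using assms unfolding avoiding_def avoiding_or_short_def by auto
  moreover have "bij_betw glue (B_walks k) (avoiding_or_short (k + block_len))"
    unfolding bij_betw_def using inj_on_glue glue_B_walk avoiding_or_short_subset_glue by blast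
  ultimately show ?thesis by (simp add: bij_betw_same_card)
qed

section \<open>Escape rate\<close>

lemma B_index_finite: "finite BI"
  unfolding B_index_eq by (rule finite_lang_sft) simp

lemma B_index_nonempty: "BI \<noteq> {}"
proof -
  obtain w where "w \<in> walks Sym A (block_len - 1)"
    using extendable_symbol[of 0] N unfolding extendable_def by auto
  then have "w \<in> lang XA (Suc (block_len - 1))" using lang_XA_Suc by simp
  then show ?thesis unfolding B_index_eq using block_len_pos by auto
qed

lemma B_mat_zero_one: "zero_one_mat BI BM"
  unfolding zero_one_mat_def B_mat_def by auto

abbreviation "rho \<equiv> spec_rad BI BM"

text \<open>Survivors of time \<open>m\<close> contain the cylinders of the \<open>\<G>\<close>-free words of length
  \<open>m + maxlen G\<close>, which correspond to the \<open>B\<^sub>\<G>\<close>-walks of length \<open>m + maxlen G - block_len\<close>.\<close>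

lemma survivors_measure_lower_bound:
  assumes pos: "rho > 0"
  shows "\<exists>c>0. \<forall>\<^sub>F m in sequentially. measure M (survivors XA G m) \<ge> c * (rho / lam) ^ m"
proof (intro exI conjI)
  define c where "c = rho ^ (maxlen G - block_len) * mass_min / lam ^ (maxlen G - 1)"
  show "c > 0" using pos lam_pos mass_min_pos by (simp add: c_def)
  show "\<forall>\<^sub>F m in sequentially. measure M (survivors XA G m) \<ge> c * (rho / lam) ^ m"
    unfolding eventually_sequentially
  proof (intro exI[of _ 1] allI impI)
    fix m :: nat assume m: "m \<ge> 1"
    define k where "k = m + (maxlen G - block_len)"
    have k1: "k \<ge> 1" using m by (simp add: k_def)
    have mk: "m + maxlen G = k + block_len" using block_len_le_maxlen by (simp add: k_def)
    have "rho ^ k \<le> real (card (B_walks k))"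
      by (rule spec_rad_power_le_card_walks[OF B_index_finite B_index_nonempty B_mat_zero_one])
    also have "\<dots> = real (card (avoiding (m + maxlen G)))"
      using card_avoiding_eq_card_B_walks[OF k1] mk by simp
    finally have "rho ^ k * mass_min / lam ^ (m + maxlen G - 1)
                  \<le> real (card (avoiding (m + maxlen G))) * mass_min / lam ^ (m + maxlen G - 1)"
      using mass_min_pos lam_pos by (intro divide_right_mono mult_right_mono) auto
    also have "\<dots> \<le> measure M (survivors XA G m)" by (rule survivors_measure_ge)
    finally have le: "rho ^ k * mass_min / lam ^ (m + maxlen G - 1) \<le> measure M (survivors XA G m)" .
    have "m + maxlen G - 1 = m + (maxlen G - 1)" using maxlen_pos by simp
    then have "c * (rho / lam) ^ m = rho ^ k * mass_min / lam ^ (m + maxlen G - 1)"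
      unfolding c_def k_def using lam_pos by (simp add: power_add power_divide field_simps)
    then show "measure M (survivors XA G m) \<ge> c * (rho / lam) ^ m" using le by simp
  qed
qed

lemma survivors_measure_upper_bound:
  assumes r': "r' > rho / lam"
  shows "\<exists>C. \<forall>\<^sub>F m in sequentially. measure M (survivors XA G m) \<le> C * r' ^ m"
proof -
  define r where "r = r' * lam"
  have rr: "r > rho" using r' lam_pos by (simp add: r_def pos_divide_less_eq)
  then obtain C where C: "\<forall>k. real (card (B_walks k)) \<le> C * r ^ k"
    using card_walks_bounded_by_power[OF B_index_finite B_index_nonempty B_mat_zero_one] by blast
  have r0: "r > 0" using rr spec_rad_nonneg[OF B_index_finite B_index_nonempty, of BM] by linarith
  define C' where "C' = C * mass_max / r ^ (block_len - 1)"
  have "measure M (survivors XA G m) \<le> C' * r' ^ m" if m: "m \<ge> block_len" for m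
  proof -
    define k where "k = Suc m - block_len"
    have k1: "k \<ge> 1" and mk: "Suc m = k + block_len" and m_eq: "m = k + (block_len - 1)"
      using m block_len_pos by (auto simp: k_def)
    have "measure M (survivors XA G m) \<le> real (card (avoiding (Suc m))) * mass_max / lam ^ m"
      by (rule survivors_measure_le)
    also have "real (card (avoiding (Suc m))) = real (card (B_walks k))"
      using card_avoiding_eq_card_B_walks[OF k1] mk by simp
    also have "real (card (B_walks k)) * mass_max / lam ^ m \<le> C * r ^ k * mass_max / lam ^ m"
      using C mass_min_pos mass_min_le_max lam_pos by (intro divide_right_mono mult_right_mono) auto
    also have "C * r ^ k * mass_max / lam ^ m = C' * r' ^ m"
    proof -
      have "r ^ k = r ^ m / r ^ (block_len - 1)" using r0 m_eq by (simp add: power_add)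
      moreover have "r' ^ m = r ^ m / lam ^ m" using lam_pos by (simp add: r_def power_mult_distrib)
      ultimately show ?thesis unfolding C'_def by (simp add: mult_ac)
    qed
    finally show ?thesis .
  qed
  then show ?thesis unfolding eventually_sequentially by blast
qed

lemma escape_rate:
  assumes pos: "rho > 0"
  shows "(\<lambda>m. - ln (measure M (survivors XA G m)) / real m) \<longlonglongrightarrow> - ln (rho / lam)"
proof -
  have "rho / lam > 0" using pos lam_pos by simp
  then have "(\<lambda>m. ln (measure M (survivors XA G m)) / real m) \<longlonglongrightarrow> ln (rho / lam)"
    by (rule exponential_growth_rate)
      (use survivors_measure_lower_bound[OF pos] survivors_measure_upper_bound in blast)+
  then show ?thesis unfolding minus_divide_left[symmetric] by (rule tendsto_minus)
qed

lemma escape_rate_eq_entropy_difference: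
  assumes "rho > 0"
  shows "- ln (rho / lam) = htop XA - htop (sft BI BM)"
  using htop_sft[OF _ Sym_nonempty A01 lam_pos] htop_sft[OF B_index_finite B_index_nonempty B_mat_zero_one assms]
    assms lam_pos by (simp add: ln_div)

text \<open>If \<open>\<lambda>(B\<^sub>\<G>) = 0\<close>, there are no long \<open>B\<^sub>\<G>\<close>-walks, hence no long \<open>\<G>\<close>-free words.\<close>

lemma survivors_eventually_null:
  assumes zero: "rho = 0"
  shows "\<forall>\<^sub>F m in sequentially. measure M (survivors XA G m) = 0"
proof -
  obtain C where C: "\<forall>k. real (card (B_walks k)) \<le> C * (1/2) ^ k"
    using card_walks_bounded_by_power[OF B_index_finite B_index_nonempty B_mat_zero_one, of "1/2"] zero
    by auto
  have "(\<lambda>k. C * (1/2::real) ^ k) \<longlonglongrightarrow> 0"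
    by (intro tendsto_mult_right_zero LIMSEQ_power_zero) simp
  then have "\<forall>\<^sub>F k in sequentially. C * (1/2::real) ^ k < 1" by (rule order_tendstoD(2)) simp
  then obtain K where K: "\<And>k. k \<ge> K \<Longrightarrow> C * (1/2::real) ^ k < 1"
    unfolding eventually_sequentially by blast
  have no_walks: "card (B_walks k) = 0" if "k \<ge> K" for k
  proof -
    have "real (card (B_walks k)) < 1" using C K[OF that] by (meson order.strict_trans1)
    then show ?thesis by simp
  qed
  show ?thesis unfolding eventually_sequentially
  proof (intro exI[of _ "block_len + K"] allI impI)
    fix m assume m: "m \<ge> block_len + K"
    define k where "k = Suc m - block_len"
    have "k \<ge> 1" "k \<ge> K" "Suc m = k + block_len" using m by (auto simp: k_def)
    then have "card (avoiding (Suc m)) = 0" using card_avoiding_eq_card_B_walks no_walks by simp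
    then have "measure M (survivors XA G m) \<le> 0" using survivors_measure_le[of m] by simp
    then show "measure M (survivors XA G m) = 0" using measure_nonneg[of M] by (simp add: order_antisym)
  qed
qed

end

theorem corollary3p2:
  fixes N :: nat and A :: "nat \<Rightarrow> nat \<Rightarrow> real" and v p :: "nat \<Rightarrow> real"
    and M :: "(nat \<Rightarrow> nat) measure" and G :: "nat list set"
  defines "Sym \<equiv> {..<N}"
  defines "XA \<equiv> sft Sym A"
  defines "lamA \<equiv> spec_rad Sym A"
  defines "P \<equiv> (\<lambda>i j. A i j * v j / (lamA * v i))"
  assumes N: "N \<ge> 1"
    and A01: "zero_one_mat Sym A"
    and Airr: "irreducible_mat Sym A"
    and vpos: "\<forall>i\<in>Sym. v i > 0"
    and veig: "\<forall>i\<in>Sym. (\<Sum>j\<in>Sym. A i j * v j) = lamA * v i"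
    and pnonneg: "\<forall>i\<in>Sym. p i \<ge> 0"
    and psum: "(\<Sum>i\<in>Sym. p i) = 1"
    and pstat: "\<forall>j\<in>Sym. (\<Sum>i\<in>Sym. p i * P i j) = p j"
    and Mprob: "prob_space M"
    and Msets: "sets M = sets (PiM UNIV (\<lambda>_. count_space (UNIV :: nat set)))"
    and Mcyl: "\<forall>n\<ge>1. \<forall>w\<in>lang XA n.
                 measure M (cyl XA w) = p (w ! 0) * (\<Prod>i<n - 1. P (w ! i) (w ! (i + 1)))"
    and Gfin: "finite G" and Gne: "G \<noteq> {}"
    and Gwords: "\<forall>w\<in>G. w \<noteq> [] \<and> w \<in> lang XA (length w)"
  shows "(spec_rad (B_index XA G) (B_mat XA G) > 0 \<longrightarrow>
            ((\<lambda>m. - ln (measure M (survivors XA G m)) / real m)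
               \<longlonglongrightarrow> - ln (spec_rad (B_index XA G) (B_mat XA G) / lamA))
            \<and> - ln (spec_rad (B_index XA G) (B_mat XA G) / lamA)
                = htop XA - htop (sft (B_index XA G) (B_mat XA G)))
       \<and> (spec_rad (B_index XA G) (B_mat XA G) = 0 \<longrightarrow>
            (\<forall>\<^sub>F m in sequentially. measure M (survivors XA G m) = 0))"
proof -
  interpret parry_hole N A v p M G
    using N A01 Airr vpos veig pnonneg psum pstat Mprob Msets Mcyl Gfin Gne Gwords
    unfolding parry_hole_def Sym_def XA_def lamA_def P_def by simp
  show ?thesis
    using escape_rate escape_rate_eq_entropy_difference survivors_eventually_null
    unfolding Sym_def XA_def lamA_def by blast
qed

end
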